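(* Let $\varphi$ be an action of a group $G$ on a strict monoidal category $\mathcal C$, let $g,h,k,\ell\in G$ and $(X,\gamma^g_X)\in\mathcal Z_g(\mathcal C)$, $(Y,\gamma^h_Y)\in\mathcal Z_h(\mathcal C)$. Then: (a) $\varphi_\ell^{-2}(X,Y):\varphi_\ell X\otimes\varphi_\ell Y\to\varphi_\ell(X\otimes Y)$ is a morphism in $\mathcal Z_G(\mathcal C)$ from $\Phi_\ell(X,\gamma^g_X)\odot\Phi_\ell(Y,\gamma^h_Y)$ to $\Phi_\ell((X,\gamma^g_X)\odot(Y,\gamma^h_Y))$; (b) $\varphi_\ell^0:\varphi_\ell(\mathbf 1)\to\mathbf 1$ is a morphism from $\Phi_\ell(\mathbf 1,\mathrm{id})$ to $(\mathbf 1,\mathrm{id})$; (c) $\varphi_{k,\ell,X}:\varphi_k(\varphi_\ell X)\to\varphi_{k\ell}X$ is a morphism from $\Phi_k(\Phi_\ell(X,\gamma^g_X))$ to $\Phi_{k\ell}(X,\gamma^g_X)$; (d) $\gamma^g_{X,Y}:X\otimes Y\to\varphi_g(Y)\otimes X$ is a morphism from $(X,\gamma^g_X)\odot(Y,\gamma^h_Y)$ to $\Phi_g(Y,\gamma^h_Y)\odot(X,\gamma^g_X)$. Here "morphism in $\mathcal Z_G(\mathcal C)$" means a morphism in $\mathcal C$ between the underlying objects that commutes with the respective half-braidings (in particular both objects lie in the same component $\mathcal Z_m(\mathcal C)$).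
   Context: All monoidal categories are strict. Comonoidal functor $(F,F^2,F^0)$: $F^0:F\mathbf 1\to\mathbf 1$, $F^2(X,Y):F(X\otimes Y)\to FX\otimes FY$ natural with $(F^2(X,Y)\otimes FZ)F^2(X\otimes Y,Z)=(FX\otimes F^2(Y,Z))F^2(X,Y\otimes Z)$, $(FX\otimes F^0)F^2(X,\mathbf 1)=\mathrm{id}=(F^0\otimes FX)F^2(\mathbf 1,X)$; strong if invertible, $F^{-2}$ the inverse of $F^2$. An action $\varphi$ of $G$ on $\mathcal C$: comonoidal endofunctors $(\varphi_g,\varphi_g^2,\varphi_g^0)$ with $\varphi_e=\mathrm{Id}$, and comonoidal natural isomorphisms $\varphi_{g,h}:\varphi_g\varphi_h\to\varphi_{gh}$ (components $\varphi_{g,h,X}$) with $\varphi_{gh,k,X}\varphi_{g,h,\varphi_kX}=\varphi_{g,hk,X}\varphi_g(\varphi_{h,k,X})$ and $\varphi_{g,e,X}=\mathrm{id}=\varphi_{e,g,X}$; each $\varphi_g$ is then strong comonoidal. Notation: $\varphi_{g_1,\dots,g_n,V}:=\varphi_{g_1\cdots g_{n-1},g_n,V}\circ\varphi_{g_1,\dots,g_{n-1},\varphi_{g_n}V}$ for $n\ge3$. For a morphism $u:A_1\otimes A_2\to B_1\otimes B_2$ write $g.u:=\varphi_g^2(B_1,B_2)\circ\varphi_g(u)\circ\varphi_g^{-2}(A_1,A_2)$. An $F$-half-braiding on $X$ (for a comonoidal endofunctor $F$) is a family of isomorphisms $\gamma_{X,V}:X\otimes V\to FV\otimes X$ natural in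 $V$ with $(F^2(V,W)\otimes X)\gamma_{X,V\otimes W}=(FV\otimes\gamma_{X,W})(\gamma_{X,V}\otimes W)$ and $(F^0\otimes X)\gamma_{X,\mathbf 1}=\mathrm{id}_X$. $\mathcal Z_g(\mathcal C)$ is the category of pairs $(X,\gamma^g_X)$ with $\gamma^g_X$ a $\varphi_g$-half-braiding on $X$, morphisms being morphisms $f$ of $\mathcal C$ with $(\varphi_gV\otimes f)\gamma_{X_1,V}=\gamma_{X_2,V}(f\otimes V)$; $\mathcal Z_G(\mathcal C)=\coprod_g\mathcal Z_g(\mathcal C)$. Product: $(X,\gamma^g_X)\odot(Y,\gamma^h_Y)=(X\otimes Y,\gamma_{X\otimes Y})$ with $\gamma_{X\otimes Y,V}=(\varphi_{g,h,V}\otimes X\otimes Y)(\gamma^g_{X,\varphi_hV}\otimes Y)(X\otimes\gamma^h_{Y,V})$, an object of $\mathcal Z_{gh}(\mathcal C)$. For $\ell\in G$ and $(X,\gamma^h_X)\in\mathcal Z_h(\mathcal C)$, $\Phi_\ell(X,\gamma^h_X):=(\varphi_\ell X,\gamma_{\ell X})$ where $\gamma_{\ell X,V}:=(\varphi_{\ell,h,\ell^{-1},V}\otimes\varphi_\ell X)\circ \ell.(\gamma^h_{X,\varphi_{\ell^{-1}}V})\circ(\varphi_\ell X\otimes\varphi^{-1}_{\ell,\ell^{-1},V}):\varphi_\ell X\otimes V\to\varphi_{\ell h\ell^{-1}}(V)\otimes\varphi_\ell X$; this is a $\varphi_{\ell h\ell^{-1}}$-half-braiding, so $\Phi_\ell(X,\gamma^h_X)\in\mathcal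 Z_{\ell h\ell^{-1}}(\mathcal C)$, and $\Phi_\ell$ acts on morphisms by $f\mapsto\varphi_\ell(f)$. *)

theory Defs
  imports "HOL-Algebra.Group"
begin

text \<open>A category with objects of type 'o and arrows of type 'm.
  smc_cmp g f is the composite g after f (defined when cod f = dom g).
  smc_tO / smc_tA is the tensor product on objects / arrows, smc_un the unit.\<close>

record ('o,'m) smcat =
  smc_ob  :: "'o set"
  smc_ar  :: "'m set"
  smc_dom :: "'m \<Rightarrow> 'o"
  smc_cod :: "'m \<Rightarrow> 'o"
  smc_cmp :: "'m \<Rightarrow> 'm \<Rightarrow> 'm"
  smc_id  :: "'o \<Rightarrow> 'm"
  smc_tO  :: "'o \<Rightarrow> 'o \<Rightarrow> 'o"
  smc_tA  :: "'m \<Rightarrow> 'm \<Rightarrow> 'm"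
  smc_un  :: "'o"

definition is_arr :: "('o,'m) smcat \<Rightarrow> 'm \<Rightarrow> 'o \<Rightarrow> 'o \<Rightarrow> bool" where
  "is_arr C f a b \<longleftrightarrow> f \<in> smc_ar C \<and> smc_dom C f = a \<and> smc_cod C f = b"

definition is_inverse :: "('o,'m) smcat \<Rightarrow> 'm \<Rightarrow> 'm \<Rightarrow> bool" where
  "is_inverse C f g \<longleftrightarrow> g \<in> smc_ar C \<and> smc_dom C g = smc_cod C f \<and> smc_cod C g = smc_dom C f
     \<and> smc_cmp C g f = smc_id C (smc_dom C f) \<and> smc_cmp C f g = smc_id C (smc_cod C f)"

definition is_iso :: "('o,'m) smcat \<Rightarrow> 'm \<Rightarrow> bool" where
  "is_iso C f \<longleftrightarrow> f \<in> smc_ar C \<and> (\<exists>g. is_inverse C f g)"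

definition inv_arr :: "('o,'m) smcat \<Rightarrow> 'm \<Rightarrow> 'm" where
  "inv_arr C f = (THE g. is_inverse C f g)"

definition category :: "('o,'m) smcat \<Rightarrow> bool" where
  "category C \<longleftrightarrow>
     (\<forall>a\<in>smc_ob C. is_arr C (smc_id C a) a a) \<and>
     (\<forall>f\<in>smc_ar C. smc_dom C f \<in> smc_ob C \<and> smc_cod C f \<in> smc_ob C) \<and>
     (\<forall>f\<in>smc_ar C. \<forall>g\<in>smc_ar C. smc_cod C f = smc_dom C g \<longrightarrow>
         is_arr C (smc_cmp C g f) (smc_dom C f) (smc_cod C g)) \<and>
     (\<forall>f\<in>smc_ar C. smc_cmp C f (smc_id C (smc_dom C f)) = f \<and>
                    smc_cmp C (smc_id C (smc_cod C f)) f = f) \<and>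
     (\<forall>f\<in>smc_ar C. \<forall>g\<in>smc_ar C. \<forall>h\<in>smc_ar C.
         smc_cod C f = smc_dom C g \<longrightarrow> smc_cod C g = smc_dom C h \<longrightarrow>
         smc_cmp C h (smc_cmp C g f) = smc_cmp C (smc_cmp C h g) f)"

definition strict_monoidal :: "('o,'m) smcat \<Rightarrow> bool" where
  "strict_monoidal C \<longleftrightarrow> category C \<and> smc_un C \<in> smc_ob C \<and>
     (\<forall>a\<in>smc_ob C. \<forall>b\<in>smc_ob C. smc_tO C a b \<in> smc_ob C) \<and>
     (\<forall>f\<in>smc_ar C. \<forall>g\<in>smc_ar C. is_arr C (smc_tA C f g)
         (smc_tO C (smc_dom C f) (smc_dom C g)) (smc_tO C (smc_cod C f) (smc_cod C g))) \<and>
     (\<forall>a\<in>smc_ob C. \<forall>b\<in>smc_ob C. smc_tA C (smc_id C a) (smc_id C b) = smc_id C (smc_tO C a b)) \<and>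
     (\<forall>f\<in>smc_ar C. \<forall>f'\<in>smc_ar C. \<forall>g\<in>smc_ar C. \<forall>g'\<in>smc_ar C.
         smc_cod C f = smc_dom C f' \<longrightarrow> smc_cod C g = smc_dom C g' \<longrightarrow>
         smc_tA C (smc_cmp C f' f) (smc_cmp C g' g) = smc_cmp C (smc_tA C f' g') (smc_tA C f g)) \<and>
     (\<forall>a\<in>smc_ob C. \<forall>b\<in>smc_ob C. \<forall>c\<in>smc_ob C.
         smc_tO C (smc_tO C a b) c = smc_tO C a (smc_tO C b c)) \<and>
     (\<forall>f\<in>smc_ar C. \<forall>g\<in>smc_ar C. \<forall>h\<in>smc_ar C.
         smc_tA C (smc_tA C f g) h = smc_tA C f (smc_tA C g h)) \<and>
     (\<forall>a\<in>smc_ob C. smc_tO C (smc_un C) a = a \<and> smc_tO C a (smc_un C) = a) \<and>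
     (\<forall>f\<in>smc_ar C. smc_tA C (smc_id C (smc_un C)) f = f \<and> smc_tA C f (smc_id C (smc_un C)) = f)"

definition endofunctor :: "('o,'m) smcat \<Rightarrow> ('o \<Rightarrow> 'o) \<Rightarrow> ('m \<Rightarrow> 'm) \<Rightarrow> bool" where
  "endofunctor C F FA \<longleftrightarrow>
     (\<forall>a\<in>smc_ob C. F a \<in> smc_ob C) \<and>
     (\<forall>f\<in>smc_ar C. is_arr C (FA f) (F (smc_dom C f)) (F (smc_cod C f))) \<and>
     (\<forall>a\<in>smc_ob C. FA (smc_id C a) = smc_id C (F a)) \<and>
     (\<forall>f\<in>smc_ar C. \<forall>g\<in>smc_ar C. smc_cod C f = smc_dom C g \<longrightarrow>
         FA (smc_cmp C g f) = smc_cmp C (FA g) (FA f))"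

definition comonoidal :: "('o,'m) smcat \<Rightarrow> ('o \<Rightarrow> 'o) \<Rightarrow> ('m \<Rightarrow> 'm)
    \<Rightarrow> ('o \<Rightarrow> 'o \<Rightarrow> 'm) \<Rightarrow> 'm \<Rightarrow> bool" where
  "comonoidal C F FA F2 F0 \<longleftrightarrow> endofunctor C F FA \<and>
     is_arr C F0 (F (smc_un C)) (smc_un C) \<and>
     (\<forall>X\<in>smc_ob C. \<forall>Y\<in>smc_ob C. is_arr C (F2 X Y) (F (smc_tO C X Y)) (smc_tO C (F X) (F Y))) \<and>
     (\<forall>f\<in>smc_ar C. \<forall>g\<in>smc_ar C.
         smc_cmp C (F2 (smc_cod C f) (smc_cod C g)) (FA (smc_tA C f g))
       = smc_cmp C (smc_tA C (FA f) (FA g)) (F2 (smc_dom C f) (smc_dom C g))) \<and>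
     (\<forall>X\<in>smc_ob C. \<forall>Y\<in>smc_ob C. \<forall>Z\<in>smc_ob C.
         smc_cmp C (smc_tA C (F2 X Y) (smc_id C (F Z))) (F2 (smc_tO C X Y) Z)
       = smc_cmp C (smc_tA C (smc_id C (F X)) (F2 Y Z)) (F2 X (smc_tO C Y Z))) \<and>
     (\<forall>X\<in>smc_ob C.
         smc_cmp C (smc_tA C (smc_id C (F X)) F0) (F2 X (smc_un C)) = smc_id C (F X) \<and>
         smc_cmp C (smc_tA C F0 (smc_id C (F X))) (F2 (smc_un C) X) = smc_id C (F X))"

text \<open>ga_act g, ga_actA g: the endofunctor phi_g on objects / arrows;
  ga_act2 g X Y = phi_g^2(X,Y); ga_act0 g = phi_g^0; ga_actC g h X = phi_{g,h,X}.\<close>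

record ('g,'o,'m) gaction =
  ga_act  :: "'g \<Rightarrow> 'o \<Rightarrow> 'o"
  ga_actA :: "'g \<Rightarrow> 'm \<Rightarrow> 'm"
  ga_act2 :: "'g \<Rightarrow> 'o \<Rightarrow> 'o \<Rightarrow> 'm"
  ga_act0 :: "'g \<Rightarrow> 'm"
  ga_actC :: "'g \<Rightarrow> 'g \<Rightarrow> 'o \<Rightarrow> 'm"

definition group_action :: "('o,'m) smcat \<Rightarrow> 'g monoid \<Rightarrow> ('g,'o,'m) gaction \<Rightarrow> bool" where
  "group_action C G P \<longleftrightarrow> strict_monoidal C \<and> group G \<and>
     (\<forall>g\<in>carrier G. comonoidal C (ga_act P g) (ga_actA P g) (ga_act2 P g) (ga_act0 P g)) \<and>
     \<comment> \<open>phi_e = Id as comonoidal functor\<close>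
     (\<forall>X\<in>smc_ob C. ga_act P \<one>\<^bsub>G\<^esub> X = X) \<and>
     (\<forall>f\<in>smc_ar C. ga_actA P \<one>\<^bsub>G\<^esub> f = f) \<and>
     (\<forall>X\<in>smc_ob C. \<forall>Y\<in>smc_ob C. ga_act2 P \<one>\<^bsub>G\<^esub> X Y = smc_id C (smc_tO C X Y)) \<and>
     ga_act0 P \<one>\<^bsub>G\<^esub> = smc_id C (smc_un C) \<and>
     \<comment> \<open>phi_{g,h} : phi_g phi_h \<rightarrow> phi_{gh} comonoidal natural isomorphism\<close>
     (\<forall>g\<in>carrier G. \<forall>h\<in>carrier G.
       (\<forall>X\<in>smc_ob C. is_arr C (ga_actC P g h X) (ga_act P g (ga_act P h X)) (ga_act P (g \<otimes>\<^bsub>G\<^esub> h) X)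
                    \<and> is_iso C (ga_actC P g h X)) \<and>
       (\<forall>f\<in>smc_ar C. smc_cmp C (ga_actA P (g \<otimes>\<^bsub>G\<^esub> h) f) (ga_actC P g h (smc_dom C f))
                    = smc_cmp C (ga_actC P g h (smc_cod C f)) (ga_actA P g (ga_actA P h f))) \<and>
       (\<forall>X\<in>smc_ob C. \<forall>Y\<in>smc_ob C.
          smc_cmp C (ga_act2 P (g \<otimes>\<^bsub>G\<^esub> h) X Y) (ga_actC P g h (smc_tO C X Y))
        = smc_cmp C (smc_tA C (ga_actC P g h X) (ga_actC P g h Y))
            (smc_cmp C (ga_act2 P g (ga_act P h X) (ga_act P h Y)) (ga_actA P g (ga_act2 P h X Y)))) \<and>
       smc_cmp C (ga_act0 P (g \<otimes>\<^bsub>G\<^esub> h)) (ga_actC P g h (smc_un C))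
        = smc_cmp C (ga_act0 P g) (ga_actA P g (ga_act0 P h))) \<and>
     \<comment> \<open>coherence\<close>
     (\<forall>g\<in>carrier G. \<forall>h\<in>carrier G. \<forall>k\<in>carrier G. \<forall>X\<in>smc_ob C.
        smc_cmp C (ga_actC P (g \<otimes>\<^bsub>G\<^esub> h) k X) (ga_actC P g h (ga_act P k X))
      = smc_cmp C (ga_actC P g (h \<otimes>\<^bsub>G\<^esub> k) X) (ga_actA P g (ga_actC P h k X))) \<and>
     (\<forall>g\<in>carrier G. \<forall>X\<in>smc_ob C.
        ga_actC P g \<one>\<^bsub>G\<^esub> X = smc_id C (ga_act P g X) \<and>
        ga_actC P \<one>\<^bsub>G\<^esub> g X = smc_id C (ga_act P g X))"

definition actC3 :: "('o,'m) smcat \<Rightarrow> 'g monoid \<Rightarrow> ('g,'o,'m) gaction \<Rightarrow> 'g \<Rightarrow> 'g \<Rightarrow> 'g \<Rightarrow> 'o \<Rightarrow> 'm" where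
  "actC3 C G P g1 g2 g3 V =
     smc_cmp C (ga_actC P (g1 \<otimes>\<^bsub>G\<^esub> g2) g3 V) (ga_actC P g1 g2 (ga_act P g3 V))"

definition half_braiding :: "('o,'m) smcat \<Rightarrow> ('o \<Rightarrow> 'o) \<Rightarrow> ('m \<Rightarrow> 'm)
    \<Rightarrow> ('o \<Rightarrow> 'o \<Rightarrow> 'm) \<Rightarrow> 'm \<Rightarrow> 'o \<Rightarrow> ('o \<Rightarrow> 'm) \<Rightarrow> bool" where
  "half_braiding C F FA F2 F0 X \<gamma> \<longleftrightarrow>
     (\<forall>V\<in>smc_ob C. is_arr C (\<gamma> V) (smc_tO C X V) (smc_tO C (F V) X) \<and> is_iso C (\<gamma> V)) \<and>
     (\<forall>f\<in>smc_ar C. smc_cmp C (smc_tA C (FA f) (smc_id C X)) (\<gamma> (smc_dom C f))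
                  = smc_cmp C (\<gamma> (smc_cod C f)) (smc_tA C (smc_id C X) f)) \<and>
     (\<forall>V\<in>smc_ob C. \<forall>W\<in>smc_ob C.
         smc_cmp C (smc_tA C (F2 V W) (smc_id C X)) (\<gamma> (smc_tO C V W))
       = smc_cmp C (smc_tA C (smc_id C (F V)) (\<gamma> W)) (smc_tA C (\<gamma> V) (smc_id C W))) \<and>
     smc_cmp C (smc_tA C F0 (smc_id C X)) (\<gamma> (smc_un C)) = smc_id C X"

type_synonym ('g,'o,'m) zobj = "'g \<times> 'o \<times> ('o \<Rightarrow> 'm)"

text \<open>An object (g, X, gamma) of Z_G(C) lies in the component Z_g(C).\<close>
definition Zobj :: "('o,'m) smcat \<Rightarrow> 'g monoid \<Rightarrow> ('g,'o,'m) gaction \<Rightarrow> ('g,'o,'m) zobj \<Rightarrow> bool" where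
  "Zobj C G P A = (case A of (g, X, \<gamma>) \<Rightarrow>
     g \<in> carrier G \<and> X \<in> smc_ob C \<and>
     half_braiding C (ga_act P g) (ga_actA P g) (ga_act2 P g) (ga_act0 P g) X \<gamma>)"

definition Zhom :: "('o,'m) smcat \<Rightarrow> 'g monoid \<Rightarrow> ('g,'o,'m) gaction
    \<Rightarrow> ('g,'o,'m) zobj \<Rightarrow> 'm \<Rightarrow> ('g,'o,'m) zobj \<Rightarrow> bool" where
  "Zhom C G P A f B = (case A of (m1, X1, \<gamma>1) \<Rightarrow> case B of (m2, X2, \<gamma>2) \<Rightarrow>
     m1 = m2 \<and> is_arr C f X1 X2 \<and>
     (\<forall>V\<in>smc_ob C. smc_cmp C (smc_tA C (smc_id C (ga_act P m1 V)) f) (\<gamma>1 V)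
                  = smc_cmp C (\<gamma>2 V) (smc_tA C f (smc_id C V))))"

definition Zunit :: "('o,'m) smcat \<Rightarrow> 'g monoid \<Rightarrow> ('g,'o,'m) zobj" where
  "Zunit C G = (\<one>\<^bsub>G\<^esub>, smc_un C, \<lambda>V. smc_id C V)"

definition Zprod :: "('o,'m) smcat \<Rightarrow> 'g monoid \<Rightarrow> ('g,'o,'m) gaction
    \<Rightarrow> ('g,'o,'m) zobj \<Rightarrow> ('g,'o,'m) zobj \<Rightarrow> ('g,'o,'m) zobj" where
  "Zprod C G P A B = (case A of (g, X, \<gamma>X) \<Rightarrow> case B of (h, Y, \<gamma>Y) \<Rightarrow>
     (g \<otimes>\<^bsub>G\<^esub> h, smc_tO C X Y,
      \<lambda>V. smc_cmp C (smc_tA C (ga_actC P g h V) (smc_id C (smc_tO C X Y)))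
            (smc_cmp C (smc_tA C (\<gamma>X (ga_act P h V)) (smc_id C Y))
                       (smc_tA C (smc_id C X) (\<gamma>Y V)))))"

text \<open>Phi_l (X, gamma^h_X) = (phi_l X, gamma_{lX}) in Z_{l h l^{-1}}(C), where
  gamma_{lX,V} = (phi_{l,h,l^{-1},V} (x) id) o l.(gamma^h_{X,phi_{l^{-1}}V}) o (id (x) phi^{-1}_{l,l^{-1},V}),
  and l.u = phi_l^2(B1,B2) o phi_l(u) o phi_l^{-2}(A1,A2) for u : A1 (x) A2 \<rightarrow> B1 (x) B2.\<close>
definition Phi :: "('o,'m) smcat \<Rightarrow> 'g monoid \<Rightarrow> ('g,'o,'m) gaction
    \<Rightarrow> 'g \<Rightarrow> ('g,'o,'m) zobj \<Rightarrow> ('g,'o,'m) zobj" where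
  "Phi C G P l A = (case A of (h, X, \<gamma>) \<Rightarrow>
     (l \<otimes>\<^bsub>G\<^esub> h \<otimes>\<^bsub>G\<^esub> inv\<^bsub>G\<^esub> l, ga_act P l X,
      \<lambda>V. let li = inv\<^bsub>G\<^esub> l; W = ga_act P li V in
        smc_cmp C (smc_tA C (actC3 C G P l h li V) (smc_id C (ga_act P l X)))
          (smc_cmp C
             (smc_cmp C (ga_act2 P l (ga_act P h W) X)
                (smc_cmp C (ga_actA P l (\<gamma> W)) (inv_arr C (ga_act2 P l X W))))
             (smc_tA C (smc_id C (ga_act P l X)) (inv_arr C (ga_actC P l li V))))))"

end

theory Submission imports Defs begin

text \<open>
  Each claim says that an arrow f intertwines two natural families
  X_i \<otimes> V \<rightarrow> \<phi>_m(V) \<otimes> X_i. Since every V is isomorphic to \<phi>_l(U) with U = \<phi>_{l^-1}(V),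
  naturality lets us test this only on objects \<phi>_l(U). There the half-braiding of
  \<Phi>_l(X, \<gamma>) is pinned down by

    (\<phi>_{lhl^-1,l,U} \<otimes> 1) \<circ> \<gamma>_{lX,\<phi>_l(U)} \<circ> \<phi>_l^2(X,U) = (\<phi>_{l,h,U} \<otimes> 1) \<circ> \<phi>_l^2(\<phi>_h(U), X) \<circ> \<phi>_l(\<gamma>_{X,U}),

  and after precomposing with the invertible maps \<phi>^2 claims (a)-(c) reduce to naturality and
  coassociativity of \<phi>^2 and the cocycle identity of \<phi>_{-,-}. Claim (d) is the
  multiplicativity of \<gamma>_X in its second argument.
\<close>

definition Phi_braiding :: "('o,'m) smcat \<Rightarrow> 'g monoid \<Rightarrow> ('g,'o,'m) gaction \<Rightarrow> 'g \<Rightarrow> 'g \<Rightarrow> 'o \<Rightarrow> ('o \<Rightarrow> 'm) \<Rightarrow> 'o \<Rightarrow> 'm"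
  where "Phi_braiding C G P l h X \<gamma> = snd (snd (Phi C G P l (h, X, \<gamma>)))"

definition Zprod_braiding :: "('o,'m) smcat \<Rightarrow> 'g monoid \<Rightarrow> ('g,'o,'m) gaction \<Rightarrow> 'g \<Rightarrow> 'o \<Rightarrow> ('o \<Rightarrow> 'm) \<Rightarrow> 'g \<Rightarrow> 'o \<Rightarrow> ('o \<Rightarrow> 'm) \<Rightarrow> 'o \<Rightarrow> 'm"
  where "Zprod_braiding C G P g X \<gamma>X h Y \<gamma>Y = snd (snd (Zprod C G P (g, X, \<gamma>X) (h, Y, \<gamma>Y)))"

lemma Phi_eq: "Phi C G P l (h, X, \<gamma>) = (l \<otimes>\<^bsub>G\<^esub> h \<otimes>\<^bsub>G\<^esub> inv\<^bsub>G\<^esub> l, ga_act P l X, Phi_braiding C G P l h X \<gamma>)"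
  unfolding Phi_braiding_def by (simp add: Phi_def)
lemma Zprod_eq: "Zprod C G P (g, X, \<gamma>X) (h, Y, \<gamma>Y) = (g \<otimes>\<^bsub>G\<^esub> h, smc_tO C X Y, Zprod_braiding C G P g X \<gamma>X h Y \<gamma>Y)"
  unfolding Zprod_braiding_def by (simp add: Zprod_def)

text \<open>Claims (a)-(c) only use naturality of the half-braidings involved, so they are
  proved for the following weaker notion.\<close>

definition natural_twist :: "('o,'m) smcat \<Rightarrow> 'g monoid \<Rightarrow> ('g,'o,'m) gaction \<Rightarrow> 'g \<Rightarrow> 'o \<Rightarrow> ('o \<Rightarrow> 'm) \<Rightarrow> bool"
  where "natural_twist C G P h X \<gamma> \<longleftrightarrow> h \<in> carrier G \<and> X \<in> smc_ob C \<and>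
    (\<forall>V\<in>smc_ob C. is_arr C (\<gamma> V) (smc_tO C X V) (smc_tO C (ga_act P h V) X)) \<and>
    (\<forall>f\<in>smc_ar C. smc_cmp C (smc_tA C (ga_actA P h f) (smc_id C X)) (\<gamma> (smc_dom C f))
                  = smc_cmp C (\<gamma> (smc_cod C f)) (smc_tA C (smc_id C X) f))"

locale monoidal_action =
  fixes C :: "('o,'m) smcat" and G :: "'g monoid" and P :: "('g,'o,'m) gaction"
  assumes ga: "group_action C G P"
begin

abbreviation ob where "ob a \<equiv> a \<in> smc_ob C"
abbreviation ar where "ar f \<equiv> f \<in> smc_ar C"
abbreviation dom where "dom \<equiv> smc_dom C"
abbreviation cod where "cod \<equiv> smc_cod C"
abbreviation cmp (infixr "\<bullet>" 55) where "g \<bullet> f \<equiv> smc_cmp C g f"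
abbreviation tA (infixr "\<odot>" 65) where "f \<odot> g \<equiv> smc_tA C f g"
abbreviation tO (infixr "\<diamond>" 65) where "a \<diamond> b \<equiv> smc_tO C a b"
abbreviation idn where "idn \<equiv> smc_id C"
abbreviation un where "un \<equiv> smc_un C"
abbreviation F where "F \<equiv> ga_act P"
abbreviation FA where "FA \<equiv> ga_actA P"
abbreviation F2 where "F2 \<equiv> ga_act2 P"
abbreviation F0 where "F0 \<equiv> ga_act0 P"
abbreviation FC where "FC \<equiv> ga_actC P"
abbreviation iv where "iv \<equiv> inv_arr C"
abbreviation iso where "iso \<equiv> is_iso C"
abbreviation gm (infixl "\<star>" 70) where "a \<star> b \<equiv> a \<otimes>\<^bsub>G\<^esub> b"
abbreviation gi where "gi a \<equiv> inv\<^bsub>G\<^esub> a"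
abbreviation e where "e \<equiv> \<one>\<^bsub>G\<^esub>"
abbreviation GG where "GG \<equiv> carrier G"

lemma strict_mon: "strict_monoidal C" using ga unfolding group_action_def by blast
lemma cat: "category C" using strict_mon unfolding strict_monoidal_def by blast
lemma group_G: "group G" using ga unfolding group_action_def by blast

lemma arr_cmp [simp]: "ar f \<Longrightarrow> ar g \<Longrightarrow> dom g = cod f \<Longrightarrow> ar (g \<bullet> f)"
  using cat unfolding category_def is_arr_def by metis
lemma dom_cmp [simp]: "ar f \<Longrightarrow> ar g \<Longrightarrow> dom g = cod f \<Longrightarrow> dom (g \<bullet> f) = dom f"
  using cat unfolding category_def is_arr_def by metis
lemma cod_cmp [simp]: "ar f \<Longrightarrow> ar g \<Longrightarrow> dom g = cod f \<Longrightarrow> cod (g \<bullet> f) = cod g"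
  using cat unfolding category_def is_arr_def by metis
lemma arr_id [simp]: "ob a \<Longrightarrow> ar (idn a)"
  using cat unfolding category_def is_arr_def by metis
lemma dom_id [simp]: "ob a \<Longrightarrow> dom (idn a) = a"
  using cat unfolding category_def is_arr_def by metis
lemma cod_id [simp]: "ob a \<Longrightarrow> cod (idn a) = a"
  using cat unfolding category_def is_arr_def by metis
lemma ob_dom [simp]: "ar f \<Longrightarrow> ob (dom f)"
  using cat unfolding category_def is_arr_def by metis
lemma ob_cod [simp]: "ar f \<Longrightarrow> ob (cod f)"
  using cat unfolding category_def is_arr_def by metis
lemma id_right [simp]: "ar f \<Longrightarrow> a = dom f \<Longrightarrow> f \<bullet> idn a = f"
  using cat unfolding category_def is_arr_def by metis
lemma id_left [simp]: "ar f \<Longrightarrow> a = cod f \<Longrightarrow> idn a \<bullet> f = f"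
  using cat unfolding category_def is_arr_def by metis
lemma assoc [simp]: "ar f \<Longrightarrow> ar g \<Longrightarrow> ar h \<Longrightarrow> dom g = cod f \<Longrightarrow> dom h = cod g
   \<Longrightarrow> (h \<bullet> g) \<bullet> f = h \<bullet> g \<bullet> f"
  using cat unfolding category_def is_arr_def by metis

lemma reassoc22: "a \<bullet> b = c \<bullet> d \<Longrightarrow> ar a \<Longrightarrow> ar b \<Longrightarrow> dom a = cod b \<Longrightarrow> ar c \<Longrightarrow> ar d \<Longrightarrow> dom c = cod d
   \<Longrightarrow> ar k \<Longrightarrow> cod k = dom b \<Longrightarrow> a \<bullet> b \<bullet> k = c \<bullet> d \<bullet> k"
proof -
  assume a: "a \<bullet> b = c \<bullet> d" "ar a" "ar b" "dom a = cod b" "ar c" "ar d" "dom c = cod d" "ar k" "cod k = dom b"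
  have dd: "dom d = dom b" using a by (metis dom_cmp)
  have "a \<bullet> b \<bullet> k = (a \<bullet> b) \<bullet> k" using a by (intro assoc[symmetric]) auto
  also have "\<dots> = (c \<bullet> d) \<bullet> k" using a by simp
  also have "\<dots> = c \<bullet> d \<bullet> k" using a dd by (intro assoc) auto
  finally show ?thesis .
qed

lemma reassoc21: "a \<bullet> b = c \<Longrightarrow> ar a \<Longrightarrow> ar b \<Longrightarrow> dom a = cod b
   \<Longrightarrow> ar k \<Longrightarrow> cod k = dom b \<Longrightarrow> a \<bullet> b \<bullet> k = c \<bullet> k"
proof -
  assume a: "a \<bullet> b = c" "ar a" "ar b" "dom a = cod b" "ar k" "cod k = dom b"
  have "a \<bullet> b \<bullet> k = (a \<bullet> b) \<bullet> k" using a by (intro assoc[symmetric]) auto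
  also have "\<dots> = c \<bullet> k" using a by simp
  finally show ?thesis .
qed

lemma reassoc32: "a \<bullet> b \<bullet> c = d \<bullet> q \<Longrightarrow> ar a \<Longrightarrow> ar b \<Longrightarrow> ar c \<Longrightarrow> dom a = cod b \<Longrightarrow> dom b = cod c
   \<Longrightarrow> ar d \<Longrightarrow> ar q \<Longrightarrow> dom d = cod q \<Longrightarrow> ar k \<Longrightarrow> cod k = dom c \<Longrightarrow> a \<bullet> b \<bullet> c \<bullet> k = d \<bullet> q \<bullet> k"
proof -
  assume a: "a \<bullet> b \<bullet> c = d \<bullet> q" "ar a" "ar b" "ar c" "dom a = cod b" "dom b = cod c" "ar d" "ar q" "dom d = cod q" "ar k" "cod k = dom c"
  have "dom (a \<bullet> b \<bullet> c) = dom c" using a(2-6) by simp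
  moreover have "dom (d \<bullet> q) = dom q" using a(7-9) by simp
  ultimately have de: "dom q = dom c" using a(1) by simp
  have "a \<bullet> b \<bullet> c \<bullet> k = (a \<bullet> b \<bullet> c) \<bullet> k" using a(2-6,10,11) by simp
  also have "\<dots> = (d \<bullet> q) \<bullet> k" using a(1) by simp
  also have "\<dots> = d \<bullet> q \<bullet> k" using a(7-11) de by (intro assoc) auto
  finally show ?thesis .
qed

lemma reassoc31: "a \<bullet> b \<bullet> c = d \<Longrightarrow> ar a \<Longrightarrow> ar b \<Longrightarrow> ar c \<Longrightarrow> dom a = cod b \<Longrightarrow> dom b = cod c
   \<Longrightarrow> ar k \<Longrightarrow> cod k = dom c \<Longrightarrow> a \<bullet> b \<bullet> c \<bullet> k = d \<bullet> k"
proof -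
  assume a: "a \<bullet> b \<bullet> c = d" "ar a" "ar b" "ar c" "dom a = cod b" "dom b = cod c" "ar k" "cod k = dom c"
  have "a \<bullet> b \<bullet> c \<bullet> k = (a \<bullet> b \<bullet> c) \<bullet> k" using a(2-8) by simp
  also have "\<dots> = d \<bullet> k" using a(1) by simp
  finally show ?thesis .
qed

lemma ob_un [simp]: "ob un" using strict_mon unfolding strict_monoidal_def by blast
lemma ob_tO [simp]: "ob a \<Longrightarrow> ob b \<Longrightarrow> ob (a \<diamond> b)" using strict_mon unfolding strict_monoidal_def by blast
lemma arr_tA [simp]: "ar f \<Longrightarrow> ar g \<Longrightarrow> ar (f \<odot> g)"
  using strict_mon unfolding strict_monoidal_def is_arr_def by blast
lemma dom_tA [simp]: "ar f \<Longrightarrow> ar g \<Longrightarrow> dom (f \<odot> g) = dom f \<diamond> dom g"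
  using strict_mon unfolding strict_monoidal_def is_arr_def by blast
lemma cod_tA [simp]: "ar f \<Longrightarrow> ar g \<Longrightarrow> cod (f \<odot> g) = cod f \<diamond> cod g"
  using strict_mon unfolding strict_monoidal_def is_arr_def by blast
lemma tA_id [simp]: "ob a \<Longrightarrow> ob b \<Longrightarrow> idn a \<odot> idn b = idn (a \<diamond> b)"
  using strict_mon unfolding strict_monoidal_def by blast
lemma interchange: "ar f \<Longrightarrow> ar f' \<Longrightarrow> ar g \<Longrightarrow> ar g' \<Longrightarrow> dom f' = cod f \<Longrightarrow> dom g' = cod g
   \<Longrightarrow> (f' \<bullet> f) \<odot> (g' \<bullet> g) = (f' \<odot> g') \<bullet> (f \<odot> g)"
  using strict_mon unfolding strict_monoidal_def by metis
lemma tO_assoc [simp]: "ob a \<Longrightarrow> ob b \<Longrightarrow> ob c \<Longrightarrow> (a \<diamond> b) \<diamond> c = a \<diamond> b \<diamond> c"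
  using strict_mon unfolding strict_monoidal_def by blast
lemma tA_assoc [simp]: "ar f \<Longrightarrow> ar g \<Longrightarrow> ar h \<Longrightarrow> (f \<odot> g) \<odot> h = f \<odot> g \<odot> h"
  using strict_mon unfolding strict_monoidal_def by blast
lemma tO_un [simp]: "ob a \<Longrightarrow> un \<diamond> a = a" "ob a \<Longrightarrow> a \<diamond> un = a"
  using strict_mon unfolding strict_monoidal_def by blast+
lemma tA_un [simp]: "ar f \<Longrightarrow> idn un \<odot> f = f" "ar f \<Longrightarrow> f \<odot> idn un = f"
  using strict_mon unfolding strict_monoidal_def by blast+

lemma comon: "g \<in> GG \<Longrightarrow> comonoidal C (F g) (FA g) (F2 g) (F0 g)"
  using ga unfolding group_action_def by blast
lemma endo: "g \<in> GG \<Longrightarrow> endofunctor C (F g) (FA g)"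
  using comon unfolding comonoidal_def by blast

lemma ob_F [simp]: "g \<in> GG \<Longrightarrow> ob a \<Longrightarrow> ob (F g a)"
  using endo unfolding endofunctor_def by blast
lemma arr_FA [simp]: "g \<in> GG \<Longrightarrow> ar f \<Longrightarrow> ar (FA g f)"
  using endo unfolding endofunctor_def is_arr_def by blast
lemma dom_FA [simp]: "g \<in> GG \<Longrightarrow> ar f \<Longrightarrow> dom (FA g f) = F g (dom f)"
  using endo unfolding endofunctor_def is_arr_def by blast
lemma cod_FA [simp]: "g \<in> GG \<Longrightarrow> ar f \<Longrightarrow> cod (FA g f) = F g (cod f)"
  using endo unfolding endofunctor_def is_arr_def by blast
lemma FA_id [simp]: "g \<in> GG \<Longrightarrow> ob a \<Longrightarrow> FA g (idn a) = idn (F g a)"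
  using endo unfolding endofunctor_def by blast
lemma FA_cmp: "g \<in> GG \<Longrightarrow> ar f \<Longrightarrow> ar h \<Longrightarrow> dom h = cod f \<Longrightarrow> FA g (h \<bullet> f) = FA g h \<bullet> FA g f"
  using endo unfolding endofunctor_def by metis

lemma arr_F2 [simp]: "g \<in> GG \<Longrightarrow> ob a \<Longrightarrow> ob b \<Longrightarrow> ar (F2 g a b)"
  using comon unfolding comonoidal_def is_arr_def by blast
lemma dom_F2 [simp]: "g \<in> GG \<Longrightarrow> ob a \<Longrightarrow> ob b \<Longrightarrow> dom (F2 g a b) = F g (a \<diamond> b)"
  using comon unfolding comonoidal_def is_arr_def by blast
lemma cod_F2 [simp]: "g \<in> GG \<Longrightarrow> ob a \<Longrightarrow> ob b \<Longrightarrow> cod (F2 g a b) = F g a \<diamond> F g b"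
  using comon unfolding comonoidal_def is_arr_def by blast
lemma arr_F0 [simp]: "g \<in> GG \<Longrightarrow> ar (F0 g)"
  using comon unfolding comonoidal_def is_arr_def by blast
lemma dom_F0 [simp]: "g \<in> GG \<Longrightarrow> dom (F0 g) = F g un"
  using comon unfolding comonoidal_def is_arr_def by blast
lemma cod_F0 [simp]: "g \<in> GG \<Longrightarrow> cod (F0 g) = un"
  using comon unfolding comonoidal_def is_arr_def by blast
lemma F2_nat: "g \<in> GG \<Longrightarrow> ar f \<Longrightarrow> ar h \<Longrightarrow>
   F2 g (cod f) (cod h) \<bullet> FA g (f \<odot> h) = (FA g f \<odot> FA g h) \<bullet> F2 g (dom f) (dom h)"
  using comon unfolding comonoidal_def by blast
lemma F2_coassoc: "g \<in> GG \<Longrightarrow> ob a \<Longrightarrow> ob b \<Longrightarrow> ob c \<Longrightarrow>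
   (F2 g a b \<odot> idn (F g c)) \<bullet> F2 g (a \<diamond> b) c = (idn (F g a) \<odot> F2 g b c) \<bullet> F2 g a (b \<diamond> c)"
  using comon unfolding comonoidal_def by blast
lemma F2_counit: "g \<in> GG \<Longrightarrow> ob a \<Longrightarrow> (idn (F g a) \<odot> F0 g) \<bullet> F2 g a un = idn (F g a)"
   "g \<in> GG \<Longrightarrow> ob a \<Longrightarrow> (F0 g \<odot> idn (F g a)) \<bullet> F2 g un a = idn (F g a)"
  using comon unfolding comonoidal_def by blast+

lemma g_one_closed [simp]: "e \<in> GG" using group_G group.is_monoid monoid.one_closed by blast
lemma F_e [simp]: "ob a \<Longrightarrow> F e a = a" using ga unfolding group_action_def by blast
lemma FA_e [simp]: "ar f \<Longrightarrow> FA e f = f" using ga unfolding group_action_def by blast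
lemma F2_e [simp]: "ob a \<Longrightarrow> ob b \<Longrightarrow> F2 e a b = idn (a \<diamond> b)" using ga unfolding group_action_def by blast
lemma F0_e [simp]: "F0 e = idn un" using ga unfolding group_action_def by blast

lemma FC_axioms: "g \<in> GG \<Longrightarrow> h \<in> GG \<Longrightarrow>
       (\<forall>X\<in>smc_ob C. is_arr C (FC g h X) (F g (F h X)) (F (g \<star> h) X) \<and> iso (FC g h X)) \<and>
       (\<forall>f\<in>smc_ar C. FA (g \<star> h) f \<bullet> FC g h (dom f) = FC g h (cod f) \<bullet> FA g (FA h f)) \<and>
       (\<forall>X\<in>smc_ob C. \<forall>Y\<in>smc_ob C. F2 (g \<star> h) X Y \<bullet> FC g h (X \<diamond> Y)
        = (FC g h X \<odot> FC g h Y) \<bullet> (F2 g (F h X) (F h Y) \<bullet> FA g (F2 h X Y))) \<and>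
       F0 (g \<star> h) \<bullet> FC g h un = F0 g \<bullet> FA g (F0 h)"
  using ga unfolding group_action_def by blast

lemma arr_FC [simp]: "g \<in> GG \<Longrightarrow> h \<in> GG \<Longrightarrow> ob a \<Longrightarrow> ar (FC g h a)"
  using FC_axioms unfolding is_arr_def by blast
lemma dom_FC [simp]: "g \<in> GG \<Longrightarrow> h \<in> GG \<Longrightarrow> ob a \<Longrightarrow> dom (FC g h a) = F g (F h a)"
  using FC_axioms unfolding is_arr_def by blast
lemma cod_FC [simp]: "g \<in> GG \<Longrightarrow> h \<in> GG \<Longrightarrow> ob a \<Longrightarrow> cod (FC g h a) = F (g \<star> h) a"
  using FC_axioms unfolding is_arr_def by blast
lemma iso_FC [simp]: "g \<in> GG \<Longrightarrow> h \<in> GG \<Longrightarrow> ob a \<Longrightarrow> iso (FC g h a)"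
  using FC_axioms by blast
lemma FC_nat: "g \<in> GG \<Longrightarrow> h \<in> GG \<Longrightarrow> ar f \<Longrightarrow>
   FA (g \<star> h) f \<bullet> FC g h (dom f) = FC g h (cod f) \<bullet> FA g (FA h f)"
  using FC_axioms by blast
lemma FC_mon: "g \<in> GG \<Longrightarrow> h \<in> GG \<Longrightarrow> ob a \<Longrightarrow> ob b \<Longrightarrow>
   F2 (g \<star> h) a b \<bullet> FC g h (a \<diamond> b) = (FC g h a \<odot> FC g h b) \<bullet> F2 g (F h a) (F h b) \<bullet> FA g (F2 h a b)"
  using FC_axioms by blast
lemma cocycle: "g \<in> GG \<Longrightarrow> h \<in> GG \<Longrightarrow> k \<in> GG \<Longrightarrow> ob a \<Longrightarrow>
   FC (g \<star> h) k a \<bullet> FC g h (F k a) = FC g (h \<star> k) a \<bullet> FA g (FC h k a)"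
  using ga unfolding group_action_def by blast
lemma FC_unit [simp]: "g \<in> GG \<Longrightarrow> ob a \<Longrightarrow> FC g e a = idn (F g a)"
  "g \<in> GG \<Longrightarrow> ob a \<Longrightarrow> FC e g a = idn (F g a)"
  using ga unfolding group_action_def by blast+

lemma gm_closed [simp]: "a \<in> GG \<Longrightarrow> b \<in> GG \<Longrightarrow> a \<star> b \<in> GG" using group_G by (simp add: group.is_monoid monoid.m_closed)
lemma gi_closed [simp]: "a \<in> GG \<Longrightarrow> gi a \<in> GG" using group_G by (simp add: group.inv_closed)
lemma g_assoc: "a \<in> GG \<Longrightarrow> b \<in> GG \<Longrightarrow> c \<in> GG \<Longrightarrow> a \<star> b \<star> c = a \<star> (b \<star> c)"
  using group_G by (simp add: group.is_monoid monoid.m_assoc)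
lemma g_linv [simp]: "a \<in> GG \<Longrightarrow> gi a \<star> a = e" using group_G by (simp add: group.l_inv)
lemma g_rinv [simp]: "a \<in> GG \<Longrightarrow> a \<star> gi a = e" using group_G by (simp add: group.r_inv)
lemma g_lone [simp]: "a \<in> GG \<Longrightarrow> e \<star> a = a" using group_G by (simp add: group.is_monoid monoid.l_one)
lemma g_rone [simp]: "a \<in> GG \<Longrightarrow> a \<star> e = a" using group_G by (simp add: group.is_monoid monoid.r_one)
lemma g_inv_mult_cancel [simp]: "x \<in> GG \<Longrightarrow> l \<in> GG \<Longrightarrow> x \<star> gi l \<star> l = x"
  by (simp add: g_assoc)
lemma g_mult_inv_cancel [simp]: "x \<in> GG \<Longrightarrow> l \<in> GG \<Longrightarrow> x \<star> l \<star> gi l = x"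
  by (simp add: g_assoc)
lemma g_inv_mult_cancel_left [simp]: "x \<in> GG \<Longrightarrow> l \<in> GG \<Longrightarrow> gi l \<star> (l \<star> x) = x"
  by (simp add: g_assoc[symmetric])
lemma g_mult_inv_cancel_left [simp]: "x \<in> GG \<Longrightarrow> l \<in> GG \<Longrightarrow> l \<star> (gi l \<star> x) = x"
  by (simp add: g_assoc[symmetric])

lemma inverse_unique: "is_inverse C f g \<Longrightarrow> is_inverse C f g' \<Longrightarrow> ar f \<Longrightarrow> g = g'"
proof -
  assume a: "is_inverse C f g" "is_inverse C f g'" "ar f"
  have "g = g \<bullet> idn (cod f)" using a unfolding is_inverse_def by simp
  also have "\<dots> = g \<bullet> (f \<bullet> g')" using a unfolding is_inverse_def by simp
  also have "\<dots> = (g \<bullet> f) \<bullet> g'" using a unfolding is_inverse_def by (intro assoc[symmetric]) auto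
  also have "\<dots> = g'" using a unfolding is_inverse_def by (simp del: assoc)
  finally show ?thesis .
qed

lemma iso_inverse: "iso f \<Longrightarrow> is_inverse C f (iv f)"
  unfolding is_iso_def inv_arr_def by (metis inverse_unique theI)

lemma iso_arr [simp]: "iso f \<Longrightarrow> ar f" unfolding is_iso_def by blast
lemma arr_iv [simp]: "iso f \<Longrightarrow> ar (iv f)" using iso_inverse[of f] unfolding is_inverse_def by blast
lemma dom_iv [simp]: "iso f \<Longrightarrow> dom (iv f) = cod f" using iso_inverse[of f] unfolding is_inverse_def by blast
lemma cod_iv [simp]: "iso f \<Longrightarrow> cod (iv f) = dom f" using iso_inverse[of f] unfolding is_inverse_def by blast
lemma iv_left [simp]: "iso f \<Longrightarrow> iv f \<bullet> f = idn (dom f)" using iso_inverse[of f] unfolding is_inverse_def by blast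
lemma iv_right [simp]: "iso f \<Longrightarrow> f \<bullet> iv f = idn (cod f)" using iso_inverse[of f] unfolding is_inverse_def by blast
lemma iv_left_cancel [simp]: "iso f \<Longrightarrow> ar k \<Longrightarrow> cod k = dom f \<Longrightarrow> iv f \<bullet> f \<bullet> k = k"
proof -
  assume a: "iso f" "ar k" "cod k = dom f"
  have "iv f \<bullet> f \<bullet> k = (iv f \<bullet> f) \<bullet> k" using a by (intro assoc[symmetric]) auto
  also have "\<dots> = k" using a by (simp del: assoc)
  finally show ?thesis .
qed
lemma iv_right_cancel [simp]: "iso f \<Longrightarrow> ar k \<Longrightarrow> cod k = cod f \<Longrightarrow> f \<bullet> iv f \<bullet> k = k"
proof -
  assume a: "iso f" "ar k" "cod k = cod f"
  have "f \<bullet> iv f \<bullet> k = (f \<bullet> iv f) \<bullet> k" using a by (intro assoc[symmetric]) auto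
  also have "\<dots> = k" using a by (simp del: assoc)
  finally show ?thesis .
qed

lemma iv_unique: "iso f \<Longrightarrow> ar g \<Longrightarrow> dom g = cod f \<Longrightarrow> g \<bullet> f = idn (dom f) \<Longrightarrow> iv f = g"
proof -
  assume a: "iso f" "ar g" "dom g = cod f" "g \<bullet> f = idn (dom f)"
  have "iv f = (g \<bullet> f) \<bullet> iv f" using a by (simp del: assoc)
  also have "\<dots> = g \<bullet> (f \<bullet> iv f)" using a by (intro assoc) auto
  also have "\<dots> = g" using a by (simp del: assoc)
  finally show ?thesis .
qed

lemma isoI: "ar f \<Longrightarrow> ar g \<Longrightarrow> dom g = cod f \<Longrightarrow> cod g = dom f \<Longrightarrow> g \<bullet> f = idn (dom f)
   \<Longrightarrow> f \<bullet> g = idn (cod f) \<Longrightarrow> iso f"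
  unfolding is_iso_def is_inverse_def by blast

lemma iso_id [simp]: "ob a \<Longrightarrow> iso (idn a)" by (rule isoI[of _ "idn a"]) auto
lemma iv_id [simp]: "ob a \<Longrightarrow> iv (idn a) = idn a" by (rule iv_unique) auto
lemma iso_iv [simp]: "iso f \<Longrightarrow> iso (iv f)" by (rule isoI[of _ f]) auto
lemma iso_cmp [simp]: "iso f \<Longrightarrow> iso g \<Longrightarrow> dom g = cod f \<Longrightarrow> iso (g \<bullet> f)"
  by (rule isoI[of _ "iv f \<bullet> iv g"]) auto
lemma iv_cmp: "iso f \<Longrightarrow> iso g \<Longrightarrow> dom g = cod f \<Longrightarrow> iv (g \<bullet> f) = iv f \<bullet> iv g"
  by (rule iv_unique) auto
lemma iso_tA [simp]: "iso f \<Longrightarrow> iso g \<Longrightarrow> iso (f \<odot> g)"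
  by (rule isoI[of _ "iv f \<odot> iv g"]) (auto simp: interchange[symmetric])
lemma iv_tA: "iso f \<Longrightarrow> iso g \<Longrightarrow> iv (f \<odot> g) = iv f \<odot> iv g"
  by (rule iv_unique) (auto simp: interchange[symmetric])
lemma iso_FA [simp]: "g \<in> GG \<Longrightarrow> iso f \<Longrightarrow> iso (FA g f)"
  by (rule isoI[of _ "FA g (iv f)"]) (auto simp: FA_cmp[symmetric])
lemma iv_FA: "g \<in> GG \<Longrightarrow> iso f \<Longrightarrow> iv (FA g f) = FA g (iv f)"
  by (rule iv_unique) (auto simp: FA_cmp[symmetric])

lemma cancel_left: "iso f \<Longrightarrow> ar x \<Longrightarrow> ar y \<Longrightarrow> cod x = dom f \<Longrightarrow> cod y = dom f \<Longrightarrow>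
   (f \<bullet> x = f \<bullet> y) = (x = y)"
  by (metis iv_left_cancel)
lemma cancel_right: "iso f \<Longrightarrow> ar x \<Longrightarrow> ar y \<Longrightarrow> dom x = cod f \<Longrightarrow> dom y = cod f \<Longrightarrow>
   (x \<bullet> f = y \<bullet> f) = (x = y)"
proof
  assume a: "iso f" "ar x" "ar y" "dom x = cod f" "dom y = cod f" "x \<bullet> f = y \<bullet> f"
  have "x = (x \<bullet> f) \<bullet> iv f" using a(1-5) by simp
  also have "\<dots> = (y \<bullet> f) \<bullet> iv f" using a by (simp del: assoc)
  also have "\<dots> = y" using a(1-5) by simp
  finally show "x = y" .
qed simp

lemma iso_square_inverse: "iso u \<Longrightarrow> iso u' \<Longrightarrow> ar w \<Longrightarrow> ar f \<Longrightarrow> dom u' = cod w \<Longrightarrow> dom f = cod u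
   \<Longrightarrow> dom w = dom u \<Longrightarrow> u' \<bullet> w = f \<bullet> u \<Longrightarrow> w \<bullet> iv u = iv u' \<bullet> f"
proof -
  assume a: "iso u" "iso u'" "ar w" "ar f" "dom u' = cod w" "dom f = cod u" "dom w = dom u" "u' \<bullet> w = f \<bullet> u"
  have "cod (f \<bullet> u) = cod (u' \<bullet> w)" using a(8) by simp
  then have "cod f = cod u'" using a(1-7) by simp
  have "w \<bullet> iv u = iv u' \<bullet> (u' \<bullet> w) \<bullet> iv u" using a(1-7) by simp
  also have "\<dots> = iv u' \<bullet> (f \<bullet> u) \<bullet> iv u" by (simp only: a(8))
  also have "\<dots> = iv u' \<bullet> f" using a \<open>cod f = cod u'\<close> by simp
  finally show ?thesis .
qed

lemma comp_solve_left: "iso p \<Longrightarrow> ar x \<Longrightarrow> cod x = dom p \<Longrightarrow> p \<bullet> x = y \<Longrightarrow> x = iv p \<bullet> y"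
  by (metis iv_left_cancel)

lemma iso_of_left_right_inverse: "ar m \<Longrightarrow> ar L \<Longrightarrow> ar R \<Longrightarrow> dom L = cod m \<Longrightarrow> cod R = dom m \<Longrightarrow> dom R = cod m
   \<Longrightarrow> L \<bullet> m = idn (dom m) \<Longrightarrow> m \<bullet> R = idn (cod m) \<Longrightarrow> iso m"
proof -
  assume a: "ar m" "ar L" "ar R" "dom L = cod m" "cod R = dom m" "dom R = cod m"
     "L \<bullet> m = idn (dom m)" "m \<bullet> R = idn (cod m)"
  have "L = L \<bullet> (m \<bullet> R)" using a by simp
  also have "\<dots> = (L \<bullet> m) \<bullet> R" using a by (intro assoc[symmetric]) auto
  also have "\<dots> = R" using a by (simp del: assoc)
  finally have "L = R" .
  then show ?thesis using a by (intro isoI[of m R]) auto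
qed

section \<open>Strongness of the action\<close>

text \<open>\<phi>_{g^-1} is a quasi-inverse of \<phi>_g: monoidality of \<phi>_{g^-1,g} yields a left inverse of \<phi>_g^2,
  monoidality of \<phi>_{g,g^-1} a right inverse on objects in the image of \<phi>_{g^-1}, and
  naturality transports invertibility to arbitrary objects.\<close>

lemma F2_left_inverse: "g \<in> GG \<Longrightarrow> ob A \<Longrightarrow> ob B \<Longrightarrow>
   \<exists>L. ar L \<and> dom L = F g A \<diamond> F g B \<and> cod L = F g (A \<diamond> B) \<and> L \<bullet> F2 g A B = idn (F g (A \<diamond> B))"
proof -
  assume a: "g \<in> GG" "ob A" "ob B"
  define g' where "g' = gi g"
  have g': "g' \<in> GG" "g' \<star> g = e" "g \<star> g' = e" using a unfolding g'_def by auto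
  have m: "FC g' g (A\<diamond>B) = (FC g' g A \<odot> FC g' g B) \<bullet> F2 g' (F g A) (F g B) \<bullet> FA g' (F2 g A B)"
    using FC_mon[of g' g A B] a g' by simp
  define L' where "L' = iv (FC g' g (A\<diamond>B)) \<bullet> (FC g' g A \<odot> FC g' g B) \<bullet> F2 g' (F g A) (F g B)"
  have L'm: "L' \<bullet> FA g' (F2 g A B) = idn (F g' (F g (A\<diamond>B)))"
  proof -
    have "L' \<bullet> FA g' (F2 g A B) = iv (FC g' g (A\<diamond>B)) \<bullet> ((FC g' g A \<odot> FC g' g B) \<bullet> F2 g' (F g A) (F g B) \<bullet> FA g' (F2 g A B))"
      unfolding L'_def using a g' by simp
    also have "\<dots> = iv (FC g' g (A\<diamond>B)) \<bullet> FC g' g (A\<diamond>B)" using m by simp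
    also have "\<dots> = idn (F g' (F g (A\<diamond>B)))" using a g' by simp
    finally show ?thesis .
  qed
  have tyL': "ar L'" "dom L' = F g' (F g A \<diamond> F g B)" "cod L' = F g' (F g (A\<diamond>B))"
    unfolding L'_def using a g' by simp_all
  have nat: "F2 g A B \<bullet> FC g g' (F g (A\<diamond>B)) = FC g g' (F g A \<diamond> F g B) \<bullet> FA g (FA g' (F2 g A B))"
    using FC_nat[of g g' "F2 g A B"] a g' by simp
  define L where "L = FC g g' (F g (A\<diamond>B)) \<bullet> FA g L' \<bullet> iv (FC g g' (F g A \<diamond> F g B))"
  have "L \<bullet> F2 g A B = FC g g' (F g (A\<diamond>B)) \<bullet> FA g L' \<bullet> (iv (FC g g' (F g A \<diamond> F g B)) \<bullet> F2 g A B)"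
    unfolding L_def using a g' tyL' by simp
  also have "iv (FC g g' (F g A \<diamond> F g B)) \<bullet> F2 g A B = FA g (FA g' (F2 g A B)) \<bullet> iv (FC g g' (F g (A\<diamond>B)))"
    by (rule sym, rule iso_square_inverse[OF _ _ _ _ _ _ _ nat[symmetric]]) (use a g' in simp_all)
  also have "FC g g' (F g (A\<diamond>B)) \<bullet> FA g L' \<bullet> FA g (FA g' (F2 g A B)) \<bullet> iv (FC g g' (F g (A\<diamond>B)))
     = FC g g' (F g (A\<diamond>B)) \<bullet> FA g (L' \<bullet> FA g' (F2 g A B)) \<bullet> iv (FC g g' (F g (A\<diamond>B)))"
    using a g' tyL' by (simp add: FA_cmp)
  also have "\<dots> = idn (F g (A \<diamond> B))" using a g' tyL' by (simp add: L'm)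
  finally show ?thesis using a g' tyL' by (intro exI[of _ L]) (simp add: L_def)
qed

lemma F2_conj_right_inverse: "g \<in> GG \<Longrightarrow> ob A \<Longrightarrow> ob B \<Longrightarrow>
   \<exists>R. ar R \<and> cod R = F g (F (gi g) A \<diamond> F (gi g) B) \<and> dom R = F g (F (gi g) A) \<diamond> F g (F (gi g) B) \<and>
      F2 g (F (gi g) A) (F (gi g) B) \<bullet> R = idn (F g (F (gi g) A) \<diamond> F g (F (gi g) B))"
proof -
  assume a: "g \<in> GG" "ob A" "ob B"
  define g' where "g' = gi g"
  have g': "g' \<in> GG" "g' \<star> g = e" "g \<star> g' = e" using a unfolding g'_def by auto
  define T where "T = FC g g' A \<odot> FC g g' B"
  have T: "iso T" "dom T = F g (F g' A) \<diamond> F g (F g' B)" "cod T = A \<diamond> B" unfolding T_def using a g' by simp_all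
  have m: "FC g g' (A\<diamond>B) = T \<bullet> F2 g (F g' A) (F g' B) \<bullet> FA g (F2 g' A B)"
    using FC_mon[of g g' A B] a g' unfolding T_def by simp
  have m2: "F2 g (F g' A) (F g' B) \<bullet> FA g (F2 g' A B) = iv T \<bullet> FC g g' (A\<diamond>B)"
    by (rule comp_solve_left[OF _ _ _ m[symmetric]]) (use a g' T in simp_all)
  define R where "R = FA g (F2 g' A B) \<bullet> iv (FC g g' (A\<diamond>B)) \<bullet> T"
  have "F2 g (F g' A) (F g' B) \<bullet> R = iv T \<bullet> FC g g' (A\<diamond>B) \<bullet> iv (FC g g' (A\<diamond>B)) \<bullet> T"
    unfolding R_def using a g' T by (simp add: reassoc22[OF m2])
  also have "\<dots> = idn (F g (F g' A) \<diamond> F g (F g' B))" using a g' T by simp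
  finally show ?thesis using a g' T unfolding g'_def[symmetric] by (intro exI[of _ R]) (simp add: R_def)
qed

lemma iso_F2_conj: "g \<in> GG \<Longrightarrow> ob A \<Longrightarrow> ob B \<Longrightarrow> iso (F2 g (F (gi g) A) (F (gi g) B))"
proof -
  assume a: "g \<in> GG" "ob A" "ob B"
  obtain L where L: "ar L" "dom L = F g (F (gi g) A) \<diamond> F g (F (gi g) B)" "cod L = F g (F (gi g) A \<diamond> F (gi g) B)"
     "L \<bullet> F2 g (F (gi g) A) (F (gi g) B) = idn (F g (F (gi g) A \<diamond> F (gi g) B))"
    using F2_left_inverse[of g "F (gi g) A" "F (gi g) B"] a by auto
  obtain R where R: "ar R" "cod R = F g (F (gi g) A \<diamond> F (gi g) B)" "dom R = F g (F (gi g) A) \<diamond> F g (F (gi g) B)"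
      "F2 g (F (gi g) A) (F (gi g) B) \<bullet> R = idn (F g (F (gi g) A) \<diamond> F g (F (gi g) B))"
    using F2_conj_right_inverse[OF a] by blast
  show ?thesis by (rule iso_of_left_right_inverse[OF _ L(1) R(1)]) (use a L R in simp_all)
qed

lemma iso_F2 [simp]: "g \<in> GG \<Longrightarrow> ob A \<Longrightarrow> ob B \<Longrightarrow> iso (F2 g A B)"
proof -
  assume a: "g \<in> GG" "ob A" "ob B"
  define g' where "g' = gi g"
  have g': "g' \<in> GG" "g' \<star> g = e" "g \<star> g' = e" "gi g' = g" using a unfolding g'_def 
    by (auto simp: group_G group.inv_inv)
  define u where "u = FC g' g A"
  define v where "v = FC g' g B"
  have uv: "iso u" "iso v" "dom u = F g' (F g A)" "cod u = A" "dom v = F g' (F g B)" "cod v = B"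
    unfolding u_def v_def using a g' by simp_all
  have nat: "F2 g A B \<bullet> FA g (u \<odot> v) = (FA g u \<odot> FA g v) \<bullet> F2 g (F g' (F g A)) (F g' (F g B))"
    using F2_nat[of g u v] a uv by simp
  have i1: "iso (F2 g (F g' (F g A)) (F g' (F g B)))"
    using iso_F2_conj[of g "F g A" "F g B"] a unfolding g'_def by simp
  have "F2 g A B = (FA g u \<odot> FA g v) \<bullet> F2 g (F g' (F g A)) (F g' (F g B)) \<bullet> iv (FA g (u \<odot> v))"
  proof -
    have "F2 g A B \<bullet> FA g (u \<odot> v) \<bullet> iv (FA g (u \<odot> v)) = (FA g u \<odot> FA g v) \<bullet> F2 g (F g' (F g A)) (F g' (F g B)) \<bullet> iv (FA g (u \<odot> v))"
      using reassoc22[OF nat, of "iv (FA g (u \<odot> v))"] a uv g' by simp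
    then show ?thesis using a uv g' by simp
  qed
  also have "iso \<dots>" using a uv i1 g' by simp
  finally show ?thesis .
qed

section \<open>The half-braidings of \<Phi>_l(X, \<gamma>) and of tensor products\<close>

abbreviation PhiB where "PhiB \<equiv> Phi_braiding C G P"
abbreviation ZpB where "ZpB \<equiv> Zprod_braiding C G P"
abbreviation twist where "twist \<equiv> natural_twist C G P"

lemma PhiB_expand: "PhiB l h X \<gamma> V = ((FC (l \<star> h) (gi l) V \<bullet> FC l h (F (gi l) V)) \<odot> idn (F l X)) \<bullet>
   ((F2 l (F h (F (gi l) V)) X \<bullet> (FA l (\<gamma> (F (gi l) V)) \<bullet> iv (F2 l X (F (gi l) V))))
    \<bullet> (idn (F l X) \<odot> iv (FC l (gi l) V)))"
  by (simp add: Phi_braiding_def Phi_def actC3_def Let_def)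

lemma ZpB_expand: "ZpB g X \<gamma>X h Y \<gamma>Y V = (FC g h V \<odot> idn (X \<diamond> Y)) \<bullet> ((\<gamma>X (F h V) \<odot> idn Y) \<bullet> (idn X \<odot> \<gamma>Y V))"
  by (simp add: Zprod_braiding_def Zprod_def)

lemma twist_grp: "twist h X \<gamma> \<Longrightarrow> h \<in> GG" unfolding natural_twist_def by blast
lemma twist_ob: "twist h X \<gamma> \<Longrightarrow> ob X" unfolding natural_twist_def by blast
lemma twist_arr [simp]: "twist h X \<gamma> \<Longrightarrow> ob V \<Longrightarrow> ar (\<gamma> V)" unfolding natural_twist_def is_arr_def by blast
lemma twist_dom [simp]: "twist h X \<gamma> \<Longrightarrow> ob V \<Longrightarrow> dom (\<gamma> V) = X \<diamond> V" unfolding natural_twist_def is_arr_def by blast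
lemma twist_cod [simp]: "twist h X \<gamma> \<Longrightarrow> ob V \<Longrightarrow> cod (\<gamma> V) = F h V \<diamond> X" unfolding natural_twist_def is_arr_def by blast
lemma twist_nat: "twist h X \<gamma> \<Longrightarrow> ar f \<Longrightarrow> (FA h f \<odot> idn X) \<bullet> \<gamma> (dom f) = \<gamma> (cod f) \<bullet> (idn X \<odot> f)"
  unfolding natural_twist_def by blast

lemma Zobj_twist: "Zobj C G P (h, X, \<gamma>) \<Longrightarrow> twist h X \<gamma>"
  unfolding Zobj_def natural_twist_def half_braiding_def by auto

lemma Zobj_braiding_tensor: "Zobj C G P (h, X, \<gamma>) \<Longrightarrow> ob V \<Longrightarrow> ob W \<Longrightarrow>
  (F2 h V W \<odot> idn X) \<bullet> \<gamma> (V \<diamond> W) = (idn (F h V) \<odot> \<gamma> W) \<bullet> (\<gamma> V \<odot> idn W)"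
  unfolding Zobj_def half_braiding_def by auto

lemma merge_r [simp]: "ar a \<Longrightarrow> ar b \<Longrightarrow> dom a = cod b \<Longrightarrow> ob x \<Longrightarrow> (a \<odot> idn x) \<bullet> (b \<odot> idn x) = (a \<bullet> b) \<odot> idn x"
  using interchange[of b a "idn x" "idn x"] by simp
lemma merge_l [simp]: "ar a \<Longrightarrow> ar b \<Longrightarrow> dom a = cod b \<Longrightarrow> ob x \<Longrightarrow> (idn x \<odot> a) \<bullet> (idn x \<odot> b) = idn x \<odot> (a \<bullet> b)"
  using interchange[of "idn x" "idn x" b a] by simp
lemma merge_r' [simp]: "ar a \<Longrightarrow> ar b \<Longrightarrow> dom a = cod b \<Longrightarrow> ob x \<Longrightarrow> ar k \<Longrightarrow> cod k = dom b \<diamond> x \<Longrightarrow>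
   (a \<odot> idn x) \<bullet> (b \<odot> idn x) \<bullet> k = ((a \<bullet> b) \<odot> idn x) \<bullet> k"
  by (subst assoc[symmetric]) (simp_all add: interchange)
lemma merge_l' [simp]: "ar a \<Longrightarrow> ar b \<Longrightarrow> dom a = cod b \<Longrightarrow> ob x \<Longrightarrow> ar k \<Longrightarrow> cod k = x \<diamond> dom b \<Longrightarrow>
   (idn x \<odot> a) \<bullet> (idn x \<odot> b) \<bullet> k = (idn x \<odot> (a \<bullet> b)) \<bullet> k"
  by (subst assoc[symmetric]) (simp_all add: interchange)

lemma merge_r2 [simp]: "ar a \<Longrightarrow> ar b \<Longrightarrow> cod b = dom a \<diamond> p \<Longrightarrow> ob x \<Longrightarrow> ob p \<Longrightarrow>
   (a \<odot> idn (p \<diamond> x)) \<bullet> (b \<odot> idn x) = ((a \<odot> idn p) \<bullet> b) \<odot> idn x"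
  using interchange[of b "a \<odot> idn p" "idn x" "idn x"] by simp
lemma merge_r2' [simp]: "ar a \<Longrightarrow> ar b \<Longrightarrow> cod b = dom a \<diamond> p \<Longrightarrow> ob x \<Longrightarrow> ob p \<Longrightarrow> ar k \<Longrightarrow> cod k = dom b \<diamond> x \<Longrightarrow>
   (a \<odot> idn (p \<diamond> x)) \<bullet> (b \<odot> idn x) \<bullet> k = (((a \<odot> idn p) \<bullet> b) \<odot> idn x) \<bullet> k"
  by (subst assoc[symmetric]) (simp_all del: assoc)

lemma id_tA_comp_tA_id: "ar u \<Longrightarrow> ar f \<Longrightarrow> (idn a \<odot> f) \<bullet> (u \<odot> idn b) = u \<odot> f" if "a = cod u" "b = dom f"
  using interchange[of u "idn (cod u)" "idn (dom f)" f] that by simp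
lemma tA_id_comp_id_tA: "ar u \<Longrightarrow> ar f \<Longrightarrow> (u \<odot> idn b) \<bullet> (idn a \<odot> f) = u \<odot> f" if "a = dom u" "b = cod f"
  using interchange[of "idn (dom u)" u f "idn (cod f)"] that by simp

lemma tA_idn_factor_iso: "ar f \<Longrightarrow> iso u \<Longrightarrow> x = dom u \<Longrightarrow> y = cod f \<Longrightarrow>
   f \<odot> idn x = (idn y \<odot> iv u) \<bullet> (f \<odot> u)"
  using interchange[of f "idn (cod f)" u "iv u"] by simp

lemma tA_comp_factor_iso:
  assumes "ar a" "ar b" "dom a = cod b" "ar f" "iso c" "dom c = dom b" "x = cod a" "y = dom f" "z = cod f"
  shows "(idn x \<odot> f) \<bullet> (a \<odot> idn y) \<bullet> (b \<odot> idn y) = ((a \<bullet> b \<bullet> iv c) \<odot> idn z) \<bullet> (c \<odot> f)"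
proof -
  have "(idn x \<odot> f) \<bullet> (a \<odot> idn y) \<bullet> (b \<odot> idn y) = (idn x \<odot> f) \<bullet> ((a \<bullet> b) \<odot> idn y)"
    using assms by simp
  also have "\<dots> = (a \<bullet> b) \<odot> f" by (rule id_tA_comp_tA_id) (use assms in simp_all)
  also have "\<dots> = ((a \<bullet> b \<bullet> iv c) \<bullet> c) \<odot> (idn z \<bullet> f)" using assms by simp
  also have "\<dots> = ((a \<bullet> b \<bullet> iv c) \<odot> idn z) \<bullet> (c \<odot> f)" by (rule interchange) (use assms in simp_all)
  finally show ?thesis .
qed

lemma idn_tO_tA: "ob a \<Longrightarrow> ob b \<Longrightarrow> ar f \<Longrightarrow> idn (a \<diamond> b) \<odot> f = idn a \<odot> idn b \<odot> f"
  by (simp add: tA_assoc[symmetric])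

lemma PhiB_typ:
  assumes nf: "twist h X \<gamma>" and l: "l \<in> GG" and V: "ob V"
  shows "ar (PhiB l h X \<gamma> V)" "dom (PhiB l h X \<gamma> V) = F l X \<diamond> V" "cod (PhiB l h X \<gamma> V) = F (l \<star> h \<star> gi l) V \<diamond> F l X"
  using twist_grp[OF nf] twist_ob[OF nf] nf l V unfolding PhiB_expand by simp_all

text \<open>Since \<phi>^2 and \<phi>_{-,-} are invertible, this equation determines PhiB on objects \<phi>_l(U).\<close>

lemma PhiB_image:
  assumes nf: "twist h X \<gamma>" and l: "l \<in> GG" and U: "ob U"
  shows "(FC (l \<star> h \<star> gi l) l U \<odot> idn (F l X)) \<bullet> PhiB l h X \<gamma> (F l U) \<bullet> F2 l X U
       = (FC l h U \<odot> idn (F l X)) \<bullet> F2 l (F h U) X \<bullet> FA l (\<gamma> U)"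
proof -
  have h: "h \<in> GG" and X: "ob X" using nf by (simp_all add: twist_grp twist_ob)
  define li where "li = gi l"
  have li: "li \<in> GG" "li \<star> l = e" "l \<star> li = e" unfolding li_def using l by auto
  define V where "V = F l U"
  define W where "W = F li V"
  define \<psi> where "\<psi> = FC li l U"
  have V: "ob V" "ob W" unfolding V_def W_def using l li U by auto
  have \<psi>: "iso \<psi>" "dom \<psi> = W" "cod \<psi> = U" unfolding \<psi>_def W_def V_def using l li U by auto
  have fact1: "FC l li V = FA l \<psi>" using cocycle[of l li l U] l li U unfolding V_def \<psi>_def by simp
  have iv1: "iv (FC l li V) = FA l (iv \<psi>)" using fact1 iv_FA l \<psi> by simp
  have stepA: "(idn (F l X) \<odot> FA l (iv \<psi>)) \<bullet> F2 l X U = F2 l X W \<bullet> FA l (idn X \<odot> iv \<psi>)"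
    using F2_nat[of l "idn X" "iv \<psi>"] l X \<psi> U by simp
  have stepC: "\<gamma> W \<bullet> (idn X \<odot> iv \<psi>) = (FA h (iv \<psi>) \<odot> idn X) \<bullet> \<gamma> U"
    using twist_nat[OF nf, of "iv \<psi>"] \<psi> by simp
  have stepD: "F2 l (F h W) X \<bullet> FA l (FA h (iv \<psi>) \<odot> idn X) = (FA l (FA h (iv \<psi>)) \<odot> idn (F l X)) \<bullet> F2 l (F h U) X"
    using F2_nat[of l "FA h (iv \<psi>)" "idn X"] l h X \<psi> U V by simp
  have sub1: "FC l h W \<bullet> FA l (FA h (iv \<psi>)) = FA (l \<star> h) (iv \<psi>) \<bullet> FC l h U"
    using FC_nat[of l h "iv \<psi>"] l h \<psi> by simp
  have sub2: "FC (l \<star> h \<star> li) l U \<bullet> FC (l \<star> h) li V = FA (l \<star> h) \<psi>"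
    using cocycle[of "l \<star> h" li l U] l h li U unfolding V_def \<psi>_def by (simp add: g_assoc)
  have fact2: "FC (l \<star> h \<star> li) l U \<bullet> FC (l \<star> h) li V \<bullet> FC l h W \<bullet> FA l (FA h (iv \<psi>)) = FC l h U"
  proof -
    have "FC (l \<star> h \<star> li) l U \<bullet> FC (l \<star> h) li V \<bullet> FC l h W \<bullet> FA l (FA h (iv \<psi>))
        = FC (l \<star> h \<star> li) l U \<bullet> FC (l \<star> h) li V \<bullet> FA (l \<star> h) (iv \<psi>) \<bullet> FC l h U"
      using l h li U V \<psi> by (simp add: sub1)
    also have "\<dots> = FA (l \<star> h) \<psi> \<bullet> FA (l \<star> h) (iv \<psi>) \<bullet> FC l h U"
      using l h li U V \<psi> by (simp add: reassoc21[OF sub2] W_def[symmetric] V_def[symmetric])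
    also have "\<dots> = FC l h U" using l h li U V \<psi> by (simp add: iv_FA[symmetric])
    finally show ?thesis .
  qed
  have "(FC (l \<star> h \<star> gi l) l U \<odot> idn (F l X)) \<bullet> PhiB l h X \<gamma> (F l U) \<bullet> F2 l X U
      = ((FC (l \<star> h \<star> li) l U \<bullet> FC (l \<star> h) li V \<bullet> FC l h W) \<odot> idn (F l X)) \<bullet> F2 l (F h W) X \<bullet>
        FA l (\<gamma> W) \<bullet> iv (F2 l X W) \<bullet> (idn (F l X) \<odot> FA l (iv \<psi>)) \<bullet> F2 l X U"
    using l h li U V X \<psi> nf by (simp add: PhiB_expand iv1 li_def[symmetric] V_def[symmetric] W_def[symmetric])
  also have "\<dots> = ((FC (l \<star> h \<star> li) l U \<bullet> FC (l \<star> h) li V \<bullet> FC l h W) \<odot> idn (F l X)) \<bullet> F2 l (F h W) X \<bullet>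
        FA l (\<gamma> W) \<bullet> iv (F2 l X W) \<bullet> F2 l X W \<bullet> FA l (idn X \<odot> iv \<psi>)"
    using l h li U V X \<psi> nf by (simp add: stepA)
  also have "\<dots> = ((FC (l \<star> h \<star> li) l U \<bullet> FC (l \<star> h) li V \<bullet> FC l h W) \<odot> idn (F l X)) \<bullet> F2 l (F h W) X \<bullet>
        FA l (\<gamma> W \<bullet> (idn X \<odot> iv \<psi>))"
    using l h li U V X \<psi> nf by (simp add: FA_cmp)
  also have "\<dots> = ((FC (l \<star> h \<star> li) l U \<bullet> FC (l \<star> h) li V \<bullet> FC l h W) \<odot> idn (F l X)) \<bullet> F2 l (F h W) X \<bullet>
        FA l (FA h (iv \<psi>) \<odot> idn X) \<bullet> FA l (\<gamma> U)"
    unfolding stepC using l h li U V X \<psi> nf by (simp add: FA_cmp)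
  also have "\<dots> = ((FC (l \<star> h \<star> li) l U \<bullet> FC (l \<star> h) li V \<bullet> FC l h W \<bullet> FA l (FA h (iv \<psi>))) \<odot> idn (F l X))
        \<bullet> F2 l (F h U) X \<bullet> FA l (\<gamma> U)"
    using l h li U V X \<psi> nf by (simp add: reassoc22[OF stepD] W_def[symmetric] V_def[symmetric])
  also have "\<dots> = (FC l h U \<odot> idn (F l X)) \<bullet> F2 l (F h U) X \<bullet> FA l (\<gamma> U)"
    by (simp only: fact2)
  finally show ?thesis .
qed

lemma PhiB_image_solved:
  assumes nf: "twist h X \<gamma>" and l: "l \<in> GG" and U: "ob U"
  shows "PhiB l h X \<gamma> (F l U) \<bullet> F2 l X U
       = ((iv (FC (l \<star> h \<star> gi l) l U) \<bullet> FC l h U) \<odot> idn (F l X)) \<bullet> F2 l (F h U) X \<bullet> FA l (\<gamma> U)"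
proof -
  have h: "h \<in> GG" and X: "ob X" using nf by (simp_all add: twist_grp twist_ob)
  have "PhiB l h X \<gamma> (F l U) \<bullet> F2 l X U = iv (FC (l \<star> h \<star> gi l) l U \<odot> idn (F l X)) \<bullet>
       ((FC l h U \<odot> idn (F l X)) \<bullet> F2 l (F h U) X \<bullet> FA l (\<gamma> U))"
    by (rule comp_solve_left) (use PhiB_image[OF nf l U] PhiB_typ[OF nf l] l h X U in simp_all)
  also have "\<dots> = ((iv (FC (l \<star> h \<star> gi l) l U) \<bullet> FC l h U) \<odot> idn (F l X)) \<bullet> F2 l (F h U) X \<bullet> FA l (\<gamma> U)"
    using l h X U nf by (simp add: iv_tA)
  finally show ?thesis .
qed

lemma PhiB_nat:
  assumes nf: "twist h X \<gamma>" and l: "l \<in> GG" and f: "ar f"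
  shows "(FA (l \<star> h \<star> gi l) f \<odot> idn (F l X)) \<bullet> PhiB l h X \<gamma> (dom f) = PhiB l h X \<gamma> (cod f) \<bullet> (idn (F l X) \<odot> f)"
proof -
  have h: "h \<in> GG" and X: "ob X" using nf by (simp_all add: twist_grp twist_ob)
  define li where "li = gi l"
  have li: "li \<in> GG" "li \<star> l = e" "l \<star> li = e" unfolding li_def using l by auto
  define V where "V = dom f"
  define V' where "V' = cod f"
  define W where "W = F li V"
  define W' where "W' = F li V'"
  define w where "w = FA li f"
  have ob: "ob V" "ob V'" "ob W" "ob W'" unfolding V_def V'_def W_def W'_def using f li by auto
  have w: "ar w" "dom w = W" "cod w = W'" unfolding w_def W_def W'_def V_def V'_def using f li by auto
  note fo = W_def[symmetric] W'_def[symmetric] V_def[symmetric] V'_def[symmetric] w_def[symmetric]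
  have s1: "FA (l \<star> h \<star> li) f \<bullet> FC (l \<star> h) li V \<bullet> FC l h W = FC (l \<star> h) li V' \<bullet> FC l h W' \<bullet> FA l (FA h w)"
  proof -
    have a: "FA (l \<star> h \<star> li) f \<bullet> FC (l \<star> h) li V = FC (l \<star> h) li V' \<bullet> FA (l \<star> h) w"
      using FC_nat[of "l \<star> h" li f] l h li f by (simp add: fo)
    have b: "FA (l \<star> h) w \<bullet> FC l h W = FC l h W' \<bullet> FA l (FA h w)"
      using FC_nat[of l h w] l h w by (simp add: fo)
    show ?thesis using l h li f ob w by (simp add: reassoc22[OF a] b fo)
  qed
  have s2: "(FA l (FA h w) \<odot> idn (F l X)) \<bullet> F2 l (F h W) X = F2 l (F h W') X \<bullet> FA l (FA h w \<odot> idn X)"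
    using F2_nat[of l "FA h w" "idn X"] l h w X by simp
  have s3: "FA l (FA h w \<odot> idn X) \<bullet> FA l (\<gamma> W) = FA l (\<gamma> W') \<bullet> FA l (idn X \<odot> w)"
    using twist_nat[OF nf w(1)] l h w X nf ob by (simp add: FA_cmp[symmetric])
  have "F2 l X W' \<bullet> FA l (idn X \<odot> w) = (idn (F l X) \<odot> FA l w) \<bullet> F2 l X W"
    using F2_nat[of l "idn X" w] l X w by simp
  then have s4: "FA l (idn X \<odot> w) \<bullet> iv (F2 l X W) = iv (F2 l X W') \<bullet> (idn (F l X) \<odot> FA l w)"
    by (rule iso_square_inverse[rotated -1]) (use l X w ob in simp_all)
  have "FC l li V' \<bullet> FA l w = f \<bullet> FC l li V"
    using FC_nat[of l li f] l li f by (simp add: fo)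
  then have s5: "FA l w \<bullet> iv (FC l li V) = iv (FC l li V') \<bullet> f"
    by (rule iso_square_inverse[rotated -1]) (use l li f ob w in \<open>simp_all add: fo\<close>)
  have "(FA (l \<star> h \<star> gi l) f \<odot> idn (F l X)) \<bullet> PhiB l h X \<gamma> (dom f)
     = ((FA (l \<star> h \<star> li) f \<bullet> FC (l \<star> h) li V \<bullet> FC l h W) \<odot> idn (F l X)) \<bullet> F2 l (F h W) X \<bullet> FA l (\<gamma> W)
        \<bullet> iv (F2 l X W) \<bullet> (idn (F l X) \<odot> iv (FC l li V))"
    using l h li f ob X nf by (simp add: PhiB_expand li_def[symmetric] fo)
  also have "\<dots> = ((FC (l \<star> h) li V' \<bullet> FC l h W' \<bullet> FA l (FA h w)) \<odot> idn (F l X)) \<bullet> F2 l (F h W) X \<bullet> FA l (\<gamma> W)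
        \<bullet> iv (F2 l X W) \<bullet> (idn (F l X) \<odot> iv (FC l li V))"
    by (simp only: s1)
  also have "\<dots> = ((FC (l \<star> h) li V' \<bullet> FC l h W') \<odot> idn (F l X)) \<bullet> (FA l (FA h w) \<odot> idn (F l X)) \<bullet> F2 l (F h W) X \<bullet> FA l (\<gamma> W)
        \<bullet> iv (F2 l X W) \<bullet> (idn (F l X) \<odot> iv (FC l li V))"
    using l h li f ob X nf w by (simp add: fo)
  also have "\<dots> = ((FC (l \<star> h) li V' \<bullet> FC l h W') \<odot> idn (F l X)) \<bullet> F2 l (F h W') X \<bullet> FA l (FA h w \<odot> idn X) \<bullet> FA l (\<gamma> W)
        \<bullet> iv (F2 l X W) \<bullet> (idn (F l X) \<odot> iv (FC l li V))"
    using l h li f ob X nf w by (simp add: reassoc22[OF s2] fo)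
  also have "\<dots> = ((FC (l \<star> h) li V' \<bullet> FC l h W') \<odot> idn (F l X)) \<bullet> F2 l (F h W') X \<bullet> FA l (\<gamma> W') \<bullet> FA l (idn X \<odot> w)
        \<bullet> iv (F2 l X W) \<bullet> (idn (F l X) \<odot> iv (FC l li V))"
    using l h li f ob X nf w by (simp add: reassoc22[OF s3] fo)
  also have "\<dots> = ((FC (l \<star> h) li V' \<bullet> FC l h W') \<odot> idn (F l X)) \<bullet> F2 l (F h W') X \<bullet> FA l (\<gamma> W') \<bullet> iv (F2 l X W')
        \<bullet> (idn (F l X) \<odot> FA l w) \<bullet> (idn (F l X) \<odot> iv (FC l li V))"
    using l h li f ob X nf w by (simp add: reassoc22[OF s4] fo)
  also have "\<dots> = ((FC (l \<star> h) li V' \<bullet> FC l h W') \<odot> idn (F l X)) \<bullet> F2 l (F h W') X \<bullet> FA l (\<gamma> W') \<bullet> iv (F2 l X W')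
        \<bullet> (idn (F l X) \<odot> (iv (FC l li V') \<bullet> f))"
    using l h li f ob X nf w by (simp add: s5 fo)
  also have "\<dots> = PhiB l h X \<gamma> (cod f) \<bullet> (idn (F l X) \<odot> f)"
    using l h li f ob X nf w by (simp add: PhiB_expand li_def[symmetric] fo)
  finally show ?thesis .
qed

lemma twist_PhiB: "twist h X \<gamma> \<Longrightarrow> l \<in> GG \<Longrightarrow> twist (l \<star> h \<star> gi l) (F l X) (PhiB l h X \<gamma>)"
  unfolding natural_twist_def[of C G P "l \<star> h \<star> gi l"] is_arr_def
  using PhiB_typ PhiB_nat twist_grp twist_ob by simp

lemma ZpB_typ:
  assumes nx: "twist g X \<gamma>X" and ny: "twist h Y \<gamma>Y" and V: "ob V"
  shows "ar (ZpB g X \<gamma>X h Y \<gamma>Y V)" "dom (ZpB g X \<gamma>X h Y \<gamma>Y V) = X \<diamond> Y \<diamond> V"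
    "cod (ZpB g X \<gamma>X h Y \<gamma>Y V) = F (g \<star> h) V \<diamond> X \<diamond> Y"
  using twist_grp[OF nx] twist_ob[OF nx] twist_grp[OF ny] twist_ob[OF ny] nx ny V unfolding ZpB_expand by simp_all

lemma ZpB_nat:
  assumes nx: "twist g X \<gamma>X" and ny: "twist h Y \<gamma>Y" and f: "ar f"
  shows "(FA (g \<star> h) f \<odot> idn (X \<diamond> Y)) \<bullet> ZpB g X \<gamma>X h Y \<gamma>Y (dom f) = ZpB g X \<gamma>X h Y \<gamma>Y (cod f) \<bullet> (idn (X \<diamond> Y) \<odot> f)"
proof -
  have g: "g \<in> GG" and X: "ob X" using nx by (simp_all add: twist_grp twist_ob)
  have h: "h \<in> GG" and Y: "ob Y" using ny by (simp_all add: twist_grp twist_ob)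
  define V where "V = dom f"
  define V' where "V' = cod f"
  have ob: "ob V" "ob V'" unfolding V_def V'_def using f by auto
  note fo = V_def[symmetric] V'_def[symmetric]
  have a: "FA (g \<star> h) f \<bullet> FC g h V = FC g h V' \<bullet> FA g (FA h f)"
    using FC_nat[OF g h f] by (simp add: fo)
  have b: "(FA g (FA h f) \<odot> idn X) \<bullet> \<gamma>X (F h V) = \<gamma>X (F h V') \<bullet> (idn X \<odot> FA h f)"
    using twist_nat[OF nx, of "FA h f"] h f by (simp add: fo)
  have c: "(FA h f \<odot> idn Y) \<bullet> \<gamma>Y V = \<gamma>Y V' \<bullet> (idn Y \<odot> f)"
    using twist_nat[OF ny f] by (simp add: fo)
  have "(FA (g \<star> h) f \<odot> idn (X \<diamond> Y)) \<bullet> ZpB g X \<gamma>X h Y \<gamma>Y (dom f)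
      = ((FA (g \<star> h) f \<bullet> FC g h V) \<odot> idn (X \<diamond> Y)) \<bullet> (\<gamma>X (F h V) \<odot> idn Y) \<bullet> (idn X \<odot> \<gamma>Y V)"
    using g h X Y ob f nx ny by (simp add: ZpB_expand fo)
  also have "\<dots> = (FC g h V' \<odot> idn (X \<diamond> Y)) \<bullet> ((FA g (FA h f) \<odot> idn X) \<odot> idn Y) \<bullet> (\<gamma>X (F h V) \<odot> idn Y) \<bullet> (idn X \<odot> \<gamma>Y V)"
    using g h X Y ob f nx ny by (simp add: a fo)
  also have "\<dots> = (FC g h V' \<odot> idn (X \<diamond> Y)) \<bullet> (((FA g (FA h f) \<odot> idn X) \<bullet> \<gamma>X (F h V)) \<odot> idn Y) \<bullet> (idn X \<odot> \<gamma>Y V)"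
    using g h X Y ob f nx ny by (subst merge_r') (simp_all add: fo)
  also have "\<dots> = (FC g h V' \<odot> idn (X \<diamond> Y)) \<bullet> ((\<gamma>X (F h V') \<bullet> (idn X \<odot> FA h f)) \<odot> idn Y) \<bullet> (idn X \<odot> \<gamma>Y V)"
    by (simp only: b)
  also have "\<dots> = (FC g h V' \<odot> idn (X \<diamond> Y)) \<bullet> (\<gamma>X (F h V') \<odot> idn Y) \<bullet> ((idn X \<odot> FA h f) \<odot> idn Y) \<bullet> (idn X \<odot> \<gamma>Y V)"
    using g h X Y ob f nx ny by (subst merge_r') (simp_all add: fo)
  also have "\<dots> = (FC g h V' \<odot> idn (X \<diamond> Y)) \<bullet> (\<gamma>X (F h V') \<odot> idn Y) \<bullet> (idn X \<odot> ((FA h f \<odot> idn Y) \<bullet> \<gamma>Y V))"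
    using g h X Y ob f nx ny by (simp add: fo)
  also have "\<dots> = (FC g h V' \<odot> idn (X \<diamond> Y)) \<bullet> (\<gamma>X (F h V') \<odot> idn Y) \<bullet> (idn X \<odot> (\<gamma>Y V' \<bullet> (idn Y \<odot> f)))"
    by (simp only: c)
  also have "\<dots> = ZpB g X \<gamma>X h Y \<gamma>Y (cod f) \<bullet> (idn (X \<diamond> Y) \<odot> f)"
    using g h X Y ob f nx ny by (simp add: ZpB_expand fo idn_tO_tA)
  finally show ?thesis .
qed

lemma twist_ZpB: "twist g X \<gamma>X \<Longrightarrow> twist h Y \<gamma>Y \<Longrightarrow> twist (g \<star> h) (X \<diamond> Y) (ZpB g X \<gamma>X h Y \<gamma>Y)"
  unfolding natural_twist_def[of C G P "g \<star> h"] is_arr_def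
  using ZpB_typ ZpB_nat twist_grp twist_ob by simp

text \<open>With u = \<phi>_{l,l^-1,V} this reduces each claim to objects of the form \<phi>_l(U).\<close>

lemma twist_compat_transport:
  assumes n1: "twist m X1 \<gamma>1" and n2: "twist m X2 \<gamma>2" and f: "ar f" "dom f = X1" "cod f = X2"
    and V: "ob V" and u: "iso u" "cod u = V"
    and eq: "(idn (F m (dom u)) \<odot> f) \<bullet> \<gamma>1 (dom u) = \<gamma>2 (dom u) \<bullet> (f \<odot> idn (dom u))"
  shows "(idn (F m V) \<odot> f) \<bullet> \<gamma>1 V = \<gamma>2 V \<bullet> (f \<odot> idn V)"
proof -
  have m: "m \<in> GG" and X1: "ob X1" and X2: "ob X2" using n1 n2 by (simp_all add: twist_grp twist_ob)
  define V' where "V' = dom u"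
  have V': "ob V'" unfolding V'_def using u by simp
  note fo = V'_def[symmetric]
  have a1: "(FA m u \<odot> idn X1) \<bullet> \<gamma>1 V' = \<gamma>1 V \<bullet> (idn X1 \<odot> u)" using twist_nat[OF n1, of u] u by (simp add: fo)
  have a2: "(FA m u \<odot> idn X2) \<bullet> \<gamma>2 V' = \<gamma>2 V \<bullet> (idn X2 \<odot> u)" using twist_nat[OF n2, of u] u by (simp add: fo)
  have "((idn (F m V) \<odot> f) \<bullet> \<gamma>1 V) \<bullet> (idn X1 \<odot> u) = (idn (F m V) \<odot> f) \<bullet> (\<gamma>1 V \<bullet> (idn X1 \<odot> u))"
    using m X1 V V' u f n1 by (simp add: fo)
  also have "\<dots> = (idn (F m V) \<odot> f) \<bullet> (FA m u \<odot> idn X1) \<bullet> \<gamma>1 V'" by (simp only: a1)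
  also have "\<dots> = ((idn (F m V) \<odot> f) \<bullet> (FA m u \<odot> idn X1)) \<bullet> \<gamma>1 V'"
    using m X1 V V' u f n1 by (simp add: fo)
  also have "(idn (F m V) \<odot> f) \<bullet> (FA m u \<odot> idn X1) = (FA m u \<odot> idn X2) \<bullet> (idn (F m V') \<odot> f)"
    using m u f V' by (simp add: id_tA_comp_tA_id tA_id_comp_id_tA fo)
  also have "((FA m u \<odot> idn X2) \<bullet> (idn (F m V') \<odot> f)) \<bullet> \<gamma>1 V' = (FA m u \<odot> idn X2) \<bullet> ((idn (F m V') \<odot> f) \<bullet> \<gamma>1 V')"
    using m X1 X2 V V' u f n1 by (simp add: fo)
  also have "\<dots> = (FA m u \<odot> idn X2) \<bullet> (\<gamma>2 V' \<bullet> (f \<odot> idn V'))" using eq by (simp add: fo)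
  also have "\<dots> = ((FA m u \<odot> idn X2) \<bullet> \<gamma>2 V') \<bullet> (f \<odot> idn V')"
    using m X1 X2 V V' u f n2 by (simp add: fo)
  also have "\<dots> = (\<gamma>2 V \<bullet> (idn X2 \<odot> u)) \<bullet> (f \<odot> idn V')" by (simp only: a2)
  also have "\<dots> = \<gamma>2 V \<bullet> ((idn X2 \<odot> u) \<bullet> (f \<odot> idn V'))"
    using m X1 X2 V V' u f n2 by (simp add: fo)
  also have "(idn X2 \<odot> u) \<bullet> (f \<odot> idn V') = (f \<odot> idn V) \<bullet> (idn X1 \<odot> u)"
    using m u f V' by (simp add: id_tA_comp_tA_id tA_id_comp_id_tA fo)
  also have "\<gamma>2 V \<bullet> ((f \<odot> idn V) \<bullet> (idn X1 \<odot> u)) = (\<gamma>2 V \<bullet> (f \<odot> idn V)) \<bullet> (idn X1 \<odot> u)"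
    using m X1 X2 V V' u f n2 by (simp add: fo)
  finally have "((idn (F m V) \<odot> f) \<bullet> \<gamma>1 V) \<bullet> (idn X1 \<odot> u) = (\<gamma>2 V \<bullet> (f \<odot> idn V)) \<bullet> (idn X1 \<odot> u)" .
  then show ?thesis using cancel_right[of "idn X1 \<odot> u"] m X1 X2 V V' u f n1 n2 by (simp add: fo del: assoc)
qed

section \<open>The four compatibilities\<close>

lemma braiding_compat:
  assumes zx: "Zobj C G P (g, X, \<gamma>X)" and zy: "Zobj C G P (h, Y, \<gamma>Y)" and V: "ob V"
  shows "(idn (F (g \<star> h) V) \<odot> \<gamma>X Y) \<bullet> ZpB g X \<gamma>X h Y \<gamma>Y V
       = ZpB (g \<star> h \<star> gi g) (F g Y) (PhiB g h Y \<gamma>Y) g X \<gamma>X V \<bullet> (\<gamma>X Y \<odot> idn V)"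
proof -
  have nx: "twist g X \<gamma>X" and ny: "twist h Y \<gamma>Y" using zx zy by (simp_all add: Zobj_twist)
  have g: "g \<in> GG" and X: "ob X" using nx by (simp_all add: twist_grp twist_ob)
  have h: "h \<in> GG" and Y: "ob Y" using ny by (simp_all add: twist_grp twist_ob)
  define c where "c = g \<star> h \<star> gi g"
  define \<Gamma> where "\<Gamma> = PhiB g h Y \<gamma>Y"
  have nG: "twist c (F g Y) \<Gamma>" unfolding c_def \<Gamma>_def using twist_PhiB[OF ny g] .
  have c: "c \<in> GG" "c \<star> g = g \<star> h" unfolding c_def using g h by simp_all
  have d1: "(idn (F g Y) \<odot> \<gamma>X V) \<bullet> (\<gamma>X Y \<odot> idn V) = (F2 g Y V \<odot> idn X) \<bullet> \<gamma>X (Y \<diamond> V)"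
    using Zobj_braiding_tensor[OF zx Y V] by simp
  have K: "(FC c g V \<odot> idn (F g Y)) \<bullet> \<Gamma> (F g V) \<bullet> F2 g Y V = (FC g h V \<odot> idn (F g Y)) \<bullet> F2 g (F h V) Y \<bullet> FA g (\<gamma>Y V)"
    unfolding c_def \<Gamma>_def using PhiB_image[OF ny g V] .
  have d2: "(FA g (\<gamma>Y V) \<odot> idn X) \<bullet> \<gamma>X (Y \<diamond> V) = \<gamma>X (F h V \<diamond> Y) \<bullet> (idn X \<odot> \<gamma>Y V)"
    using twist_nat[OF nx, of "\<gamma>Y V"] ny V by simp
  have d3: "(F2 g (F h V) Y \<odot> idn X) \<bullet> \<gamma>X (F h V \<diamond> Y) = (idn (F g (F h V)) \<odot> \<gamma>X Y) \<bullet> (\<gamma>X (F h V) \<odot> idn Y)"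
    using Zobj_braiding_tensor[OF zx, of "F h V" Y] h V Y by simp
  have sl: "(FC g h V \<odot> idn (F g Y \<diamond> X)) \<bullet> (idn (F g (F h V)) \<odot> \<gamma>X Y) = (idn (F (g \<star> h) V) \<odot> \<gamma>X Y) \<bullet> (FC g h V \<odot> idn (X \<diamond> Y))"
    using g h V X Y nx by (simp add: id_tA_comp_tA_id tA_id_comp_id_tA)
  have "ZpB c (F g Y) \<Gamma> g X \<gamma>X V \<bullet> (\<gamma>X Y \<odot> idn V)
     = (((FC c g V \<odot> idn (F g Y)) \<bullet> \<Gamma> (F g V)) \<odot> idn X) \<bullet> (idn (F g Y) \<odot> \<gamma>X V) \<bullet> (\<gamma>X Y \<odot> idn V)"
    using g h c V X Y nx ny nG by (simp add: ZpB_expand)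
  also have "\<dots> = (((FC c g V \<odot> idn (F g Y)) \<bullet> \<Gamma> (F g V)) \<odot> idn X) \<bullet> (F2 g Y V \<odot> idn X) \<bullet> \<gamma>X (Y \<diamond> V)"
    by (simp only: d1)
  also have "\<dots> = (((FC c g V \<odot> idn (F g Y)) \<bullet> \<Gamma> (F g V) \<bullet> F2 g Y V) \<odot> idn X) \<bullet> \<gamma>X (Y \<diamond> V)"
    using g h c V X Y nx ny nG by simp
  also have "\<dots> = (((FC g h V \<odot> idn (F g Y)) \<bullet> F2 g (F h V) Y \<bullet> FA g (\<gamma>Y V)) \<odot> idn X) \<bullet> \<gamma>X (Y \<diamond> V)"
    by (simp only: K)
  also have "\<dots> = (FC g h V \<odot> idn (F g Y \<diamond> X)) \<bullet> (F2 g (F h V) Y \<odot> idn X) \<bullet> (FA g (\<gamma>Y V) \<odot> idn X) \<bullet> \<gamma>X (Y \<diamond> V)"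
    using g h c V X Y nx ny nG by simp
  also have "\<dots> = (FC g h V \<odot> idn (F g Y \<diamond> X)) \<bullet> (F2 g (F h V) Y \<odot> idn X) \<bullet> \<gamma>X (F h V \<diamond> Y) \<bullet> (idn X \<odot> \<gamma>Y V)"
    by (simp only: d2)
  also have "\<dots> = (FC g h V \<odot> idn (F g Y \<diamond> X)) \<bullet> (idn (F g (F h V)) \<odot> \<gamma>X Y) \<bullet> (\<gamma>X (F h V) \<odot> idn Y) \<bullet> (idn X \<odot> \<gamma>Y V)"
    using g h c V X Y nx ny nG by (simp add: reassoc22[OF d3] del: merge_r' merge_r2' merge_r merge_r2)
  also have "\<dots> = (idn (F (g \<star> h) V) \<odot> \<gamma>X Y) \<bullet> (FC g h V \<odot> idn (X \<diamond> Y)) \<bullet> (\<gamma>X (F h V) \<odot> idn Y) \<bullet> (idn X \<odot> \<gamma>Y V)"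
    using g h c V X Y nx ny nG by (simp add: reassoc22[OF sl] del: merge_r' merge_r2' merge_r merge_r2)
  also have "\<dots> = (idn (F (g \<star> h) V) \<odot> \<gamma>X Y) \<bullet> ZpB g X \<gamma>X h Y \<gamma>Y V"
    using g h c V X Y nx ny nG by (simp add: ZpB_expand del: merge_r' merge_r2' merge_r merge_r2)
  finally show ?thesis unfolding c_def \<Gamma>_def by simp
qed

lemma Phi_unit_compat:
  assumes l: "l \<in> GG" and V: "ob V"
  shows "(idn V \<odot> F0 l) \<bullet> PhiB l e un idn V = F0 l \<odot> idn V"
proof -
  define li where "li = gi l"
  have li: "li \<in> GG" "l \<star> li = e" unfolding li_def using l by auto
  define W where "W = F li V"
  have W: "ob W" unfolding W_def using li V by simp
  define u where "u = FC l li V"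
  have u: "iso u" "dom u = F l W" "cod u = V" unfolding u_def W_def using l li V by simp_all
  have iv2: "iv (F2 l un W) = F0 l \<odot> idn (F l W)"
    by (rule iv_unique) (use l W F2_counit(2)[OF l W] in simp_all)
  have c1: "(idn (F l W) \<odot> F0 l) \<bullet> F2 l W un = idn (F l W)" using F2_counit(1)[OF l W] .
  have "PhiB l e un idn V = (u \<odot> idn (F l un)) \<bullet> F2 l W un \<bullet> iv (F2 l un W) \<bullet> (idn (F l un) \<odot> iv u)"
    using l li W V u unfolding u_def W_def by (simp add: PhiB_expand li_def[symmetric])
  also have "\<dots> = (u \<odot> idn (F l un)) \<bullet> F2 l W un \<bullet> (F0 l \<odot> idn (F l W)) \<bullet> (idn (F l un) \<odot> iv u)"
    by (simp only: iv2)
  finally have G: "PhiB l e un idn V = (u \<odot> idn (F l un)) \<bullet> F2 l W un \<bullet> (F0 l \<odot> idn (F l W)) \<bullet> (idn (F l un) \<odot> iv u)" .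
  have sl1: "(idn V \<odot> F0 l) \<bullet> (u \<odot> idn (F l un)) = u \<bullet> (idn (F l W) \<odot> F0 l)"
  proof -
    have "(idn V \<odot> F0 l) \<bullet> (u \<odot> idn (F l un)) = u \<odot> F0 l" using l u by (simp add: id_tA_comp_tA_id)
    also have "\<dots> = u \<bullet> (idn (F l W) \<odot> F0 l)"
      using tA_id_comp_id_tA[where u=u and f="F0 l" and a="F l W" and b=un] l u by simp
    finally show ?thesis .
  qed
  have sl2: "(F0 l \<odot> idn (F l W)) \<bullet> (idn (F l un) \<odot> iv u) = iv u \<bullet> (F0 l \<odot> idn V)"
  proof -
    have "(F0 l \<odot> idn (F l W)) \<bullet> (idn (F l un) \<odot> iv u) = F0 l \<odot> iv u" using l u by (simp add: tA_id_comp_id_tA)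
    also have "\<dots> = iv u \<bullet> (F0 l \<odot> idn V)"
      using id_tA_comp_tA_id[where u="F0 l" and f="iv u" and a=un and b=V] l u by simp
    finally show ?thesis .
  qed
  have "(idn V \<odot> F0 l) \<bullet> PhiB l e un idn V = (idn V \<odot> F0 l) \<bullet> (u \<odot> idn (F l un)) \<bullet> F2 l W un \<bullet> (F0 l \<odot> idn (F l W)) \<bullet> (idn (F l un) \<odot> iv u)"
    by (simp only: G)
  also have "\<dots> = u \<bullet> (idn (F l W) \<odot> F0 l) \<bullet> F2 l W un \<bullet> (F0 l \<odot> idn (F l W)) \<bullet> (idn (F l un) \<odot> iv u)"
    using l u W V by (simp add: reassoc22[OF sl1] del: merge_r' merge_r2' merge_r merge_r2 merge_l merge_l')
  also have "\<dots> = u \<bullet> (F0 l \<odot> idn (F l W)) \<bullet> (idn (F l un) \<odot> iv u)"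
    using l u W V by (simp add: reassoc21[OF c1] del: merge_r' merge_r2' merge_r merge_r2 merge_l merge_l')
  also have "\<dots> = u \<bullet> iv u \<bullet> (F0 l \<odot> idn V)"
    using l u W V by (simp only: sl2)
  also have "\<dots> = F0 l \<odot> idn V" using l u W V by simp
  finally show ?thesis .
qed

lemma FC_conj_tensor_coherence:
  assumes g: "g \<in> GG" and h: "h \<in> GG" and l: "l \<in> GG" and U: "ob U"
  shows "FC (l \<star> (g \<star> h) \<star> gi l) l U \<bullet> FC (l \<star> g \<star> gi l) (l \<star> h \<star> gi l) (F l U) \<bullet> FA (l \<star> g \<star> gi l) (iv (FC (l \<star> h \<star> gi l) l U) \<bullet> FC l h U) \<bullet> iv (FC (l \<star> g \<star> gi l) l (F h U)) \<bullet> FC l g (F h U) = FC l (g \<star> h) U \<bullet> FA l (FC g h U)"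
proof -
  let ?a = "l \<star> g \<star> gi l" and ?b = "l \<star> h \<star> gi l" and ?c = "l \<star> (g \<star> h) \<star> gi l"
  let ?V' = "F l U" and ?U' = "F h U"
  let ?t = "iv (FC ?b l U) \<bullet> FC l h U"
  let ?N = "FC ?a ?b ?V' \<bullet> FA ?a ?t \<bullet> iv (FC ?a l ?U') \<bullet> FC l g ?U'"
  have abc [simp]: "?a \<star> ?b = ?c" using l g h by (simp add: g_assoc)
  have gg: "?a \<in> GG" "?b \<in> GG" "?c \<in> GG" "g \<star> h \<in> GG" using l g h by simp_all
  have ob: "ob ?V'" "ob ?U'" "ob (F g ?U')" using l h g U by simp_all
  have t: "iso ?t" "dom ?t = F l ?U'" "cod ?t = F ?b ?V'" using l h U by simp_all
  note basic = l g h U ob gg t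
  have e1: "FC ?c l U \<bullet> FC ?a ?b ?V' = FC ?a (l \<star> h) U \<bullet> FA ?a (FC ?b l U)"
    using cocycle[of ?a ?b l U] basic by simp
  have e2: "FA ?a (FC ?b l U) \<bullet> FA ?a ?t = FA ?a (FC l h U)"
    using basic by (simp add: FA_cmp[symmetric])
  have e3: "FC ?a (l \<star> h) U \<bullet> FA ?a (FC l h U) = FC (l \<star> g) h U \<bullet> FC ?a l ?U'"
    using cocycle[of ?a l h U] basic by simp
  have e4: "FC (l \<star> g) h U \<bullet> FC l g ?U' = FC l (g \<star> h) U \<bullet> FA l (FC g h U)"
    using cocycle[of l g h U] basic by simp
  have "FC ?c l U \<bullet> ?N = FC ?a (l \<star> h) U \<bullet> FA ?a (FC ?b l U) \<bullet> FA ?a ?t \<bullet> iv (FC ?a l ?U') \<bullet> FC l g ?U'"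
    using basic by (simp add: reassoc22[OF e1])
  also have "\<dots> = FC ?a (l \<star> h) U \<bullet> FA ?a (FC l h U) \<bullet> iv (FC ?a l ?U') \<bullet> FC l g ?U'"
    using basic by (simp add: reassoc21[OF e2])
  also have "\<dots> = FC (l \<star> g) h U \<bullet> FC ?a l ?U' \<bullet> iv (FC ?a l ?U') \<bullet> FC l g ?U'"
    using basic by (simp add: reassoc22[OF e3])
  also have "\<dots> = FC (l \<star> g) h U \<bullet> FC l g ?U'" using basic by simp
  also have "\<dots> = FC l (g \<star> h) U \<bullet> FA l (FC g h U)" by (rule e4)
  finally show ?thesis .
qed

lemma ZpB_conj_on_image:
  assumes nx: "twist g X \<gamma>X" and ny: "twist h Y \<gamma>Y" and l: "l \<in> GG" and U: "ob U"
  shows "ZpB (l \<star> g \<star> gi l) (F l X) (PhiB l g X \<gamma>X) (l \<star> h \<star> gi l) (F l Y) (PhiB l h Y \<gamma>Y) (F l U)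
           \<bullet> (F2 l X Y \<odot> idn (F l U)) \<bullet> F2 l (X \<diamond> Y) U
     = ((FC (l \<star> g \<star> gi l) (l \<star> h \<star> gi l) (F l U) \<bullet> FA (l \<star> g \<star> gi l) (iv (FC (l \<star> h \<star> gi l) l U) \<bullet> FC l h U) \<bullet> iv (FC (l \<star> g \<star> gi l) l (F h U)) \<bullet> FC l g (F h U)) \<odot> idn (F l X \<diamond> F l Y))
           \<bullet> (idn (F l (F g (F h U))) \<odot> F2 l X Y) \<bullet> F2 l (F g (F h U)) (X \<diamond> Y)
           \<bullet> FA l (\<gamma>X (F h U) \<odot> idn Y) \<bullet> FA l (idn X \<odot> \<gamma>Y U)"
proof -
  have g: "g \<in> GG" and X: "ob X" using nx by (simp_all add: twist_grp twist_ob)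
  have h: "h \<in> GG" and Y: "ob Y" using ny by (simp_all add: twist_grp twist_ob)
  let ?a = "l \<star> g \<star> gi l" and ?b = "l \<star> h \<star> gi l" and ?c = "l \<star> (g \<star> h) \<star> gi l"
  let ?V' = "F l U" and ?U' = "F h U"
  let ?GX = "PhiB l g X \<gamma>X" and ?GY = "PhiB l h Y \<gamma>Y"
  let ?t = "iv (FC ?b l U) \<bullet> FC l h U"
  have abc [simp]: "?a \<star> ?b = ?c" using l g h by (simp add: g_assoc)
  have gg: "?a \<in> GG" "?b \<in> GG" "?c \<in> GG" "g \<star> h \<in> GG" using l g h by simp_all
  have ob: "ob ?V'" "ob ?U'" "ob (F g ?U')" using l h g U by simp_all
  have t: "iso ?t" "dom ?t = F l ?U'" "cod ?t = F ?b ?V'" using l h U by simp_all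
  note tyX = PhiB_typ[OF nx l] and tyY = PhiB_typ[OF ny l]
  note basic = l g h X Y U ob gg t nx ny tyX tyY
  let ?N = "FC ?a ?b ?V' \<bullet> FA ?a ?t \<bullet> iv (FC ?a l ?U') \<bullet> FC l g ?U'"
  have co: "(F2 l X Y \<odot> idn (F l U)) \<bullet> F2 l (X \<diamond> Y) U = (idn (F l X) \<odot> F2 l Y U) \<bullet> F2 l X (Y \<diamond> U)"
    using F2_coassoc[OF l X Y U] .
  have KY: "?GY ?V' \<bullet> F2 l Y U = (?t \<odot> idn (F l Y)) \<bullet> F2 l ?U' Y \<bullet> FA l (\<gamma>Y U)"
    using PhiB_image_solved[OF ny l U] .
  have KX: "?GX (F l ?U') \<bullet> F2 l X ?U' = ((iv (FC ?a l ?U') \<bullet> FC l g ?U') \<odot> idn (F l X)) \<bullet> F2 l (F g ?U') X \<bullet> FA l (\<gamma>X ?U')"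
    using PhiB_image_solved[OF nx l ob(2)] .
  have NX: "(FA ?a ?t \<odot> idn (F l X)) \<bullet> ?GX (F l ?U') = ?GX (F ?b ?V') \<bullet> (idn (F l X) \<odot> ?t)"
    using PhiB_nat[OF nx l, of ?t] t by simp
  have S0: "ZpB ?a (F l X) ?GX ?b (F l Y) ?GY ?V' \<bullet> (F2 l X Y \<odot> idn (F l U)) \<bullet> F2 l (X \<diamond> Y) U
    = (FC ?a ?b ?V' \<odot> idn (F l X \<diamond> F l Y)) \<bullet> (?GX (F ?b ?V') \<odot> idn (F l Y)) \<bullet> (idn (F l X) \<odot> (?GY ?V' \<bullet> F2 l Y U)) \<bullet> F2 l X (Y \<diamond> U)"
    using basic by (simp add: ZpB_expand co)
  have A2: "(idn (F l X) \<odot> FA l (\<gamma>Y U)) \<bullet> F2 l X (Y \<diamond> U) = F2 l X (?U' \<diamond> Y) \<bullet> FA l (idn X \<odot> \<gamma>Y U)"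
    using F2_nat[of l "idn X" "\<gamma>Y U"] basic by simp
  have A3: "(idn (F l X) \<odot> F2 l ?U' Y) \<bullet> F2 l X (?U' \<diamond> Y) = (F2 l X ?U' \<odot> idn (F l Y)) \<bullet> F2 l (X \<diamond> ?U') Y"
    using F2_coassoc[OF l X ob(2) Y] by simp
  have A4: "idn (F l X) \<odot> ((?t \<odot> idn (F l Y)) \<bullet> F2 l ?U' Y \<bullet> FA l (\<gamma>Y U))
     = (idn (F l X) \<odot> (?t \<odot> idn (F l Y))) \<bullet> (idn (F l X) \<odot> F2 l ?U' Y) \<bullet> (idn (F l X) \<odot> FA l (\<gamma>Y U))"
    using basic by simp
  have a2: "(idn (F l X) \<odot> ((?t \<odot> idn (F l Y)) \<bullet> F2 l ?U' Y \<bullet> FA l (\<gamma>Y U))) \<bullet> F2 l X (Y \<diamond> U)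
     = ((idn (F l X) \<odot> ?t) \<odot> idn (F l Y)) \<bullet> (F2 l X ?U' \<odot> idn (F l Y)) \<bullet> F2 l (X \<diamond> ?U') Y \<bullet> FA l (idn X \<odot> \<gamma>Y U)"
    unfolding A4 using basic
    by (simp add: A2 reassoc22[OF A3] del: merge_l merge_l' merge_r merge_r' merge_r2 merge_r2')
  have NX2: "?GX (F ?b ?V') \<bullet> (idn (F l X) \<odot> ?t) \<bullet> F2 l X ?U' = (FA ?a ?t \<odot> idn (F l X)) \<bullet> ?GX (F l ?U') \<bullet> F2 l X ?U'"
    using basic by (simp add: reassoc22[OF NX[symmetric]] del: merge_l merge_l' merge_r merge_r' merge_r2 merge_r2')
  have C: "(FA l (\<gamma>X ?U') \<odot> idn (F l Y)) \<bullet> F2 l (X \<diamond> ?U') Y \<bullet> FA l (idn X \<odot> \<gamma>Y U)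
      = F2 l (F g ?U' \<diamond> X) Y \<bullet> FA l (\<gamma>X ?U' \<odot> idn Y) \<bullet> FA l (idn X \<odot> \<gamma>Y U)"
  proof -
    have c0: "(FA l (\<gamma>X ?U') \<odot> idn (F l Y)) \<bullet> F2 l (X \<diamond> ?U') Y = F2 l (F g ?U' \<diamond> X) Y \<bullet> FA l (\<gamma>X ?U' \<odot> idn Y)"
      using F2_nat[of l "\<gamma>X ?U'" "idn Y"] basic by simp
    show ?thesis using basic by (simp add: reassoc22[OF c0] del: merge_l merge_l' merge_r merge_r' merge_r2 merge_r2')
  qed
  have D: "(F2 l (F g ?U') X \<odot> idn (F l Y)) \<bullet> F2 l (F g ?U' \<diamond> X) Y \<bullet> FA l (\<gamma>X ?U' \<odot> idn Y) \<bullet> FA l (idn X \<odot> \<gamma>Y U)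
      = (idn (F l (F g ?U')) \<odot> F2 l X Y) \<bullet> F2 l (F g ?U') (X \<diamond> Y) \<bullet> FA l (\<gamma>X ?U' \<odot> idn Y) \<bullet> FA l (idn X \<odot> \<gamma>Y U)"
    using reassoc22[OF F2_coassoc[OF l ob(3) X Y]] basic by (simp del: merge_l merge_l' merge_r merge_r' merge_r2 merge_r2')
  have "ZpB ?a (F l X) ?GX ?b (F l Y) ?GY ?V' \<bullet> (F2 l X Y \<odot> idn (F l U)) \<bullet> F2 l (X \<diamond> Y) U
    = (FC ?a ?b ?V' \<odot> idn (F l X \<diamond> F l Y)) \<bullet> (?GX (F ?b ?V') \<odot> idn (F l Y)) \<bullet> (idn (F l X) \<odot> ((?t \<odot> idn (F l Y)) \<bullet> F2 l ?U' Y \<bullet> FA l (\<gamma>Y U))) \<bullet> F2 l X (Y \<diamond> U)"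
    unfolding S0 KY ..
  also have "\<dots> = (FC ?a ?b ?V' \<odot> idn (F l X \<diamond> F l Y)) \<bullet> (?GX (F ?b ?V') \<odot> idn (F l Y)) \<bullet> ((idn (F l X) \<odot> ?t) \<odot> idn (F l Y)) \<bullet> (F2 l X ?U' \<odot> idn (F l Y)) \<bullet> F2 l (X \<diamond> ?U') Y \<bullet> FA l (idn X \<odot> \<gamma>Y U)"
    unfolding a2 ..
  also have "\<dots> = (FC ?a ?b ?V' \<odot> idn (F l X \<diamond> F l Y)) \<bullet> ((?GX (F ?b ?V') \<bullet> (idn (F l X) \<odot> ?t) \<bullet> F2 l X ?U') \<odot> idn (F l Y)) \<bullet> F2 l (X \<diamond> ?U') Y \<bullet> FA l (idn X \<odot> \<gamma>Y U)"
    using basic by (simp del: tA_assoc merge_r2 merge_r2')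
  also have "\<dots> = (FC ?a ?b ?V' \<odot> idn (F l X \<diamond> F l Y)) \<bullet> (((FA ?a ?t \<odot> idn (F l X)) \<bullet> (((iv (FC ?a l ?U') \<bullet> FC l g ?U') \<odot> idn (F l X)) \<bullet> F2 l (F g ?U') X \<bullet> FA l (\<gamma>X ?U'))) \<odot> idn (F l Y)) \<bullet> F2 l (X \<diamond> ?U') Y \<bullet> FA l (idn X \<odot> \<gamma>Y U)"
    unfolding NX2 KX ..
  also have "\<dots> = (?N \<odot> idn (F l X \<diamond> F l Y)) \<bullet> (F2 l (F g ?U') X \<odot> idn (F l Y)) \<bullet> (FA l (\<gamma>X ?U') \<odot> idn (F l Y)) \<bullet> F2 l (X \<diamond> ?U') Y \<bullet> FA l (idn X \<odot> \<gamma>Y U)"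
    using basic by simp
  also have "\<dots> = (?N \<odot> idn (F l X \<diamond> F l Y)) \<bullet> (F2 l (F g ?U') X \<odot> idn (F l Y)) \<bullet> F2 l (F g ?U' \<diamond> X) Y \<bullet> FA l (\<gamma>X ?U' \<odot> idn Y) \<bullet> FA l (idn X \<odot> \<gamma>Y U)"
    unfolding C ..
  also have "\<dots> = (?N \<odot> idn (F l X \<diamond> F l Y)) \<bullet> (idn (F l (F g ?U')) \<odot> F2 l X Y) \<bullet> F2 l (F g ?U') (X \<diamond> Y) \<bullet> FA l (\<gamma>X ?U' \<odot> idn Y) \<bullet> FA l (idn X \<odot> \<gamma>Y U)"
    unfolding D ..
  finally show ?thesis .
qed

lemma Phi_tensor_compat_precomposed:
  assumes nx: "twist g X \<gamma>X" and ny: "twist h Y \<gamma>Y" and l: "l \<in> GG" and U: "ob U"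
  shows "(FC (l \<star> (g \<star> h) \<star> gi l) l U \<odot> idn (F l (X \<diamond> Y))) \<bullet> (idn (F (l \<star> (g \<star> h) \<star> gi l) (F l U)) \<odot> iv (F2 l X Y))
     \<bullet> ZpB (l \<star> g \<star> gi l) (F l X) (PhiB l g X \<gamma>X) (l \<star> h \<star> gi l) (F l Y) (PhiB l h Y \<gamma>Y) (F l U)
     \<bullet> (F2 l X Y \<odot> idn (F l U)) \<bullet> F2 l (X \<diamond> Y) U
   = (FC l (g \<star> h) U \<odot> idn (F l (X \<diamond> Y))) \<bullet> F2 l (F (g \<star> h) U) (X \<diamond> Y) \<bullet> FA l (ZpB g X \<gamma>X h Y \<gamma>Y U)"
proof -
  have g: "g \<in> GG" and X: "ob X" using nx by (simp_all add: twist_grp twist_ob)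
  have h: "h \<in> GG" and Y: "ob Y" using ny by (simp_all add: twist_grp twist_ob)
  let ?a = "l \<star> g \<star> gi l" and ?b = "l \<star> h \<star> gi l" and ?c = "l \<star> (g \<star> h) \<star> gi l"
  let ?V' = "F l U" and ?U' = "F h U"
  let ?GX = "PhiB l g X \<gamma>X" and ?GY = "PhiB l h Y \<gamma>Y"
  let ?t = "iv (FC ?b l U) \<bullet> FC l h U"
  have abc [simp]: "?a \<star> ?b = ?c" using l g h by (simp add: g_assoc)
  have gg: "?a \<in> GG" "?b \<in> GG" "?c \<in> GG" "g \<star> h \<in> GG" using l g h by simp_all
  have ob: "ob ?V'" "ob ?U'" "ob (F g ?U')" using l h g U by simp_all
  have t: "iso ?t" "dom ?t = F l ?U'" "cod ?t = F ?b ?V'" using l h U by simp_all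
  note tyX = PhiB_typ[OF nx l] and tyY = PhiB_typ[OF ny l]
  note basic = l g h X Y U ob gg t nx ny tyX tyY
  let ?N = "FC ?a ?b ?V' \<bullet> FA ?a ?t \<bullet> iv (FC ?a l ?U') \<bullet> FC l g ?U'"
  have S: "ZpB ?a (F l X) ?GX ?b (F l Y) ?GY ?V' \<bullet> (F2 l X Y \<odot> idn (F l U)) \<bullet> F2 l (X \<diamond> Y) U
     = (?N \<odot> idn (F l X \<diamond> F l Y)) \<bullet> (idn (F l (F g ?U')) \<odot> F2 l X Y) \<bullet> F2 l (F g ?U') (X \<diamond> Y) \<bullet> FA l (\<gamma>X ?U' \<odot> idn Y) \<bullet> FA l (idn X \<odot> \<gamma>Y U)"
    using ZpB_conj_on_image[OF nx ny l U] .
  have cocyc: "FC ?c l U \<bullet> ?N = FC l (g \<star> h) U \<bullet> FA l (FC g h U)"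
    using FC_conj_tensor_coherence[OF g h l U] .
  have tyN: "ar ?N" "dom ?N = F l (F g ?U')" "cod ?N = F ?c ?V'" using basic by simp_all
  have sl: "(idn (F ?c ?V') \<odot> iv (F2 l X Y)) \<bullet> (?N \<odot> idn (F l X \<diamond> F l Y))
      = (?N \<odot> idn (F l (X \<diamond> Y))) \<bullet> (idn (F l (F g ?U')) \<odot> iv (F2 l X Y))"
    using basic tyN by (simp add: id_tA_comp_tA_id tA_id_comp_id_tA)
  have S11: "(FA l (FC g h U) \<odot> idn (F l (X \<diamond> Y))) \<bullet> F2 l (F g ?U') (X \<diamond> Y) = F2 l (F (g \<star> h) U) (X \<diamond> Y) \<bullet> FA l (FC g h U \<odot> idn (X \<diamond> Y))"
    using F2_nat[of l "FC g h U" "idn (X \<diamond> Y)"] basic by simp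
  note nomerge = merge_l merge_l' merge_r merge_r' merge_r2 merge_r2'
  have "(FC ?c l U \<odot> idn (F l (X \<diamond> Y))) \<bullet> (idn (F ?c ?V') \<odot> iv (F2 l X Y))
     \<bullet> ZpB ?a (F l X) ?GX ?b (F l Y) ?GY ?V' \<bullet> (F2 l X Y \<odot> idn (F l U)) \<bullet> F2 l (X \<diamond> Y) U
     = (FC ?c l U \<odot> idn (F l (X \<diamond> Y))) \<bullet> (idn (F ?c ?V') \<odot> iv (F2 l X Y)) \<bullet> (?N \<odot> idn (F l X \<diamond> F l Y)) \<bullet> (idn (F l (F g ?U')) \<odot> F2 l X Y) \<bullet> F2 l (F g ?U') (X \<diamond> Y) \<bullet> FA l (\<gamma>X ?U' \<odot> idn Y) \<bullet> FA l (idn X \<odot> \<gamma>Y U)"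
    unfolding S ..
  also have "\<dots> = (FC ?c l U \<odot> idn (F l (X \<diamond> Y))) \<bullet> (?N \<odot> idn (F l (X \<diamond> Y))) \<bullet> (idn (F l (F g ?U')) \<odot> iv (F2 l X Y)) \<bullet> (idn (F l (F g ?U')) \<odot> F2 l X Y) \<bullet> F2 l (F g ?U') (X \<diamond> Y) \<bullet> FA l (\<gamma>X ?U' \<odot> idn Y) \<bullet> FA l (idn X \<odot> \<gamma>Y U)"
    using basic tyN by (simp add: reassoc22[OF sl] del: nomerge)
  also have "\<dots> = ((FC ?c l U \<bullet> ?N) \<odot> idn (F l (X \<diamond> Y))) \<bullet> F2 l (F g ?U') (X \<diamond> Y) \<bullet> FA l (\<gamma>X ?U' \<odot> idn Y) \<bullet> FA l (idn X \<odot> \<gamma>Y U)"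
    using basic tyN by simp
  also have "\<dots> = ((FC l (g \<star> h) U \<bullet> FA l (FC g h U)) \<odot> idn (F l (X \<diamond> Y))) \<bullet> F2 l (F g ?U') (X \<diamond> Y) \<bullet> FA l (\<gamma>X ?U' \<odot> idn Y) \<bullet> FA l (idn X \<odot> \<gamma>Y U)"
    unfolding cocyc ..
  also have "\<dots> = (FC l (g \<star> h) U \<odot> idn (F l (X \<diamond> Y))) \<bullet> (FA l (FC g h U) \<odot> idn (F l (X \<diamond> Y))) \<bullet> F2 l (F g ?U') (X \<diamond> Y) \<bullet> FA l (\<gamma>X ?U' \<odot> idn Y) \<bullet> FA l (idn X \<odot> \<gamma>Y U)"
    using basic by simp
  also have "\<dots> = (FC l (g \<star> h) U \<odot> idn (F l (X \<diamond> Y))) \<bullet> F2 l (F (g \<star> h) U) (X \<diamond> Y) \<bullet> FA l (FC g h U \<odot> idn (X \<diamond> Y)) \<bullet> FA l (\<gamma>X ?U' \<odot> idn Y) \<bullet> FA l (idn X \<odot> \<gamma>Y U)"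
    using basic by (simp add: reassoc22[OF S11] del: nomerge)
  also have "\<dots> = (FC l (g \<star> h) U \<odot> idn (F l (X \<diamond> Y))) \<bullet> F2 l (F (g \<star> h) U) (X \<diamond> Y) \<bullet> FA l (ZpB g X \<gamma>X h Y \<gamma>Y U)"
    using basic by (simp add: ZpB_expand FA_cmp del: nomerge)
  finally show ?thesis .
qed
lemma Phi_tensor_compat:
  assumes nx: "twist g X \<gamma>X" and ny: "twist h Y \<gamma>Y" and l: "l \<in> GG" and V: "ob V"
  shows "(idn (F (l \<star> (g \<star> h) \<star> gi l) V) \<odot> iv (F2 l X Y)) \<bullet> ZpB (l \<star> g \<star> gi l) (F l X) (PhiB l g X \<gamma>X) (l \<star> h \<star> gi l) (F l Y) (PhiB l h Y \<gamma>Y) V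
     = PhiB l (g \<star> h) (X \<diamond> Y) (ZpB g X \<gamma>X h Y \<gamma>Y) V \<bullet> (iv (F2 l X Y) \<odot> idn V)"
proof -
  have g: "g \<in> GG" and X: "ob X" using nx by (simp_all add: twist_grp twist_ob)
  have h: "h \<in> GG" and Y: "ob Y" using ny by (simp_all add: twist_grp twist_ob)
  let ?a = "l \<star> g \<star> gi l" and ?b = "l \<star> h \<star> gi l" and ?c = "l \<star> (g \<star> h) \<star> gi l"
  have abc [simp]: "?a \<star> ?b = ?c" using l g h by (simp add: g_assoc)
  let ?S = "ZpB ?a (F l X) (PhiB l g X \<gamma>X) ?b (F l Y) (PhiB l h Y \<gamma>Y)"
  let ?T = "PhiB l (g \<star> h) (X \<diamond> Y) (ZpB g X \<gamma>X h Y \<gamma>Y)"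
  have n1: "twist ?c (F l X \<diamond> F l Y) ?S" using twist_ZpB[OF twist_PhiB[OF nx l] twist_PhiB[OF ny l]] by simp
  have nxy: "twist (g \<star> h) (X \<diamond> Y) (ZpB g X \<gamma>X h Y \<gamma>Y)" using twist_ZpB[OF nx ny] .
  have n2: "twist ?c (F l (X \<diamond> Y)) ?T" using twist_PhiB[OF nxy l] .
  let ?f = "iv (F2 l X Y)"
  have f: "ar ?f" "dom ?f = F l X \<diamond> F l Y" "cod ?f = F l (X \<diamond> Y)" using l X Y by simp_all
  have cgh: "?c \<in> GG" "g \<star> h \<in> GG" using l g h by simp_all
  show ?thesis
  proof (rule twist_compat_transport[OF n1 n2 f V])
    show "iso (FC l (gi l) V)" using l V by simp
    show "cod (FC l (gi l) V) = V" using l V by simp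
    define U where "U = F (gi l) V"
    have U: "ob U" unfolding U_def using l V by simp
    have dU: "dom (FC l (gi l) V) = F l U" unfolding U_def using l V by simp
    let ?P = "FC ?c l U \<odot> idn (F l (X \<diamond> Y))"
    let ?E = "(F2 l X Y \<odot> idn (F l U)) \<bullet> F2 l (X \<diamond> Y) U"
    let ?L = "(idn (F ?c (F l U)) \<odot> ?f) \<bullet> ?S (F l U)"
    let ?R = "?T (F l U) \<bullet> (?f \<odot> idn (F l U))"
    have ty: "ar ?L" "ar ?R" "dom ?L = F l X \<diamond> F l Y \<diamond> F l U" "dom ?R = F l X \<diamond> F l Y \<diamond> F l U"
      "cod ?L = F ?c (F l U) \<diamond> F l (X \<diamond> Y)" "cod ?R = F ?c (F l U) \<diamond> F l (X \<diamond> Y)"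
      using ZpB_typ[OF twist_PhiB[OF nx l] twist_PhiB[OF ny l]] PhiB_typ[OF nxy l] l g h X Y U cgh by simp_all
    have isoE: "iso ?E" "cod ?E = F l X \<diamond> F l Y \<diamond> F l U" using l X Y U by simp_all
    have isoP: "iso ?P" "dom ?P = F ?c (F l U) \<diamond> F l (X \<diamond> Y)" using l X Y U cgh by simp_all
    have e1: "?P \<bullet> ?L \<bullet> ?E = (FC l (g \<star> h) U \<odot> idn (F l (X \<diamond> Y))) \<bullet> F2 l (F (g \<star> h) U) (X \<diamond> Y) \<bullet> FA l (ZpB g X \<gamma>X h Y \<gamma>Y U)"
      using Phi_tensor_compat_precomposed[OF nx ny l U] ZpB_typ[OF twist_PhiB[OF nx l] twist_PhiB[OF ny l]] l g h X Y U cgh by simp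
    have e2: "?P \<bullet> ?R \<bullet> ?E = (FC l (g \<star> h) U \<odot> idn (F l (X \<diamond> Y))) \<bullet> F2 l (F (g \<star> h) U) (X \<diamond> Y) \<bullet> FA l (ZpB g X \<gamma>X h Y \<gamma>Y U)"
    proof -
      have "?P \<bullet> ?R \<bullet> ?E = ?P \<bullet> ?T (F l U) \<bullet> F2 l (X \<diamond> Y) U"
        using PhiB_typ[OF nxy l] l g h X Y U cgh by simp
      also have "\<dots> = (FC l (g \<star> h) U \<odot> idn (F l (X \<diamond> Y))) \<bullet> F2 l (F (g \<star> h) U) (X \<diamond> Y) \<bullet> FA l (ZpB g X \<gamma>X h Y \<gamma>Y U)"
        using PhiB_image[OF nxy l U] by simp
      finally show ?thesis .
    qed
    have "?L \<bullet> ?E = ?R \<bullet> ?E"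
      using e1 e2 cancel_left[OF isoP(1), of "?L \<bullet> ?E" "?R \<bullet> ?E"] ty isoE isoP by simp
    then have "?L = ?R" using cancel_right[OF isoE(1), of ?L ?R] ty isoE by simp
    then show "(idn (F ?c (dom (FC l (gi l) V))) \<odot> ?f) \<bullet> ?S (dom (FC l (gi l) V)) = ?T (dom (FC l (gi l) V)) \<bullet> (?f \<odot> idn (dom (FC l (gi l) V)))"
      unfolding dU .
  qed
qed

lemma FC_conj_comp_coherence:
  assumes g: "g \<in> GG" and l: "l \<in> GG" and k: "k \<in> GG" and U: "ob U"
  shows "(iv (FC (k \<star> (l \<star> g \<star> gi l) \<star> gi k) k (F l U)) \<bullet> FC k (l \<star> g \<star> gi l) (F l U)) \<bullet> FA k (iv (FC (l \<star> g \<star> gi l) l U) \<bullet> FC l g U)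
           \<bullet> iv (FC k l (F g U))
       = FA (k \<star> (l \<star> g \<star> gi l) \<star> gi k) (iv (FC k l U)) \<bullet> iv (FC (k \<star> (l \<star> g \<star> gi l) \<star> gi k) (k \<star> l) U) \<bullet> FC (k \<star> l) g U"
proof -
  let ?m = "l \<star> g \<star> gi l" and ?p = "k \<star> l"
  let ?n = "k \<star> ?m \<star> gi k"
  let ?W = "F l U"
  let ?A = "iv (FC ?n k ?W) \<bullet> FC k ?m ?W"
  let ?B = "iv (FC ?m l U) \<bullet> FC l g U"
  have gg: "?m \<in> GG" "?n \<in> GG" "?p \<in> GG" using g l k by simp_all
  have e2 [simp]: "?n \<star> ?p = ?p \<star> g" using g l k by (simp add: g_assoc)
  have e3 [simp]: "k \<star> ?m \<star> l = ?p \<star> g" using g l k by (simp add: g_assoc)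
  have e4 [simp]: "k \<star> (l \<star> g) = ?p \<star> g" using g l k by (simp add: g_assoc)
  have ob: "ob ?W" "ob (F g U)" using l g U by simp_all
  note basic = g l k U gg ob
  note nomerge = merge_l merge_l' merge_r merge_r' merge_r2 merge_r2'
  have c1: "FC ?n ?p U \<bullet> FA ?n (FC k l U) \<bullet> iv (FC ?n k ?W) = FC (k \<star> ?m) l U"
  proof -
    have cc: "FC (k \<star> ?m) l U \<bullet> FC ?n k ?W = FC ?n ?p U \<bullet> FA ?n (FC k l U)"
      using cocycle[of ?n k l U] basic by simp
    have "FC ?n ?p U \<bullet> FA ?n (FC k l U) \<bullet> iv (FC ?n k ?W) = FC (k \<star> ?m) l U \<bullet> FC ?n k ?W \<bullet> iv (FC ?n k ?W)"
      using basic by (simp add: reassoc22[OF cc[symmetric]] del: nomerge)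
    then show ?thesis using basic by simp
  qed
  have c2: "FC (k \<star> ?m) l U \<bullet> FC k ?m ?W = FC k (l \<star> g) U \<bullet> FA k (FC ?m l U)"
    using cocycle[of k ?m l U] basic by simp
  have c3: "FA k (FC ?m l U) \<bullet> FA k ?B = FA k (FC l g U)"
    using basic by (simp add: FA_cmp[symmetric])
  have c4: "FC k (l \<star> g) U \<bullet> FA k (FC l g U) = FC ?p g U \<bullet> FC k l (F g U)"
    using cocycle[of k l g U] basic by simp
  have "FC ?n ?p U \<bullet> FA ?n (FC k l U) \<bullet> (?A \<bullet> FA k ?B \<bullet> iv (FC k l (F g U)))
      = FC (k \<star> ?m) l U \<bullet> FC k ?m ?W \<bullet> FA k ?B \<bullet> iv (FC k l (F g U))"
  proof -
    have "FC ?n ?p U \<bullet> FA ?n (FC k l U) \<bullet> (?A \<bullet> FA k ?B \<bullet> iv (FC k l (F g U)))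
      = FC ?n ?p U \<bullet> FA ?n (FC k l U) \<bullet> iv (FC ?n k ?W) \<bullet> FC k ?m ?W \<bullet> FA k ?B \<bullet> iv (FC k l (F g U))"
      using basic by simp
    also have "\<dots> = FC (k \<star> ?m) l U \<bullet> FC k ?m ?W \<bullet> FA k ?B \<bullet> iv (FC k l (F g U))"
      using basic by (simp add: reassoc31[OF c1])
    finally show ?thesis .
  qed
  also have "\<dots> = FC k (l \<star> g) U \<bullet> FA k (FC ?m l U) \<bullet> FA k ?B \<bullet> iv (FC k l (F g U))"
    using basic by (simp add: reassoc22[OF c2] del: nomerge)
  also have "\<dots> = FC k (l \<star> g) U \<bullet> FA k (FC l g U) \<bullet> iv (FC k l (F g U))"
    using basic by (simp add: reassoc21[OF c3] del: nomerge)
  also have "\<dots> = FC ?p g U" using basic by (simp add: reassoc22[OF c4] del: nomerge)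
  finally have "FC ?n ?p U \<bullet> FA ?n (FC k l U) \<bullet> (?A \<bullet> FA k ?B \<bullet> iv (FC k l (F g U))) = FC ?p g U" .
  then have "?A \<bullet> FA k ?B \<bullet> iv (FC k l (F g U)) = iv (FC ?n ?p U \<bullet> FA ?n (FC k l U)) \<bullet> FC ?p g U"
    by (intro comp_solve_left) (use basic in simp_all)
  then show ?thesis using basic by (simp add: iv_cmp iv_FA)
qed

lemma Phi_comp_compat_precomposed:
  assumes nx: "twist g X \<gamma>X" and l: "l \<in> GG" and k: "k \<in> GG" and U: "ob U"
  shows "(idn (F (k \<star> (l \<star> g \<star> gi l) \<star> gi k) (F k (F l U))) \<odot> FC k l X) \<bullet> PhiB k (l \<star> g \<star> gi l) (F l X) (PhiB l g X \<gamma>X) (F k (F l U))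
          \<bullet> F2 k (F l X) (F l U) \<bullet> FA k (F2 l X U)
       = PhiB (k \<star> l) g X \<gamma>X (F k (F l U)) \<bullet> (FC k l X \<odot> idn (F k (F l U))) \<bullet> F2 k (F l X) (F l U) \<bullet> FA k (F2 l X U)"
proof -
  have g: "g \<in> GG" and X: "ob X" using nx by (simp_all add: twist_grp twist_ob)
  let ?m = "l \<star> g \<star> gi l" and ?p = "k \<star> l"
  let ?n = "k \<star> ?m \<star> gi k"
  let ?W = "F l U" and ?V = "F k (F l U)" and ?Y = "F l X"
  let ?Gl = "PhiB l g X \<gamma>X" and ?Gk = "PhiB k ?m ?Y (PhiB l g X \<gamma>X)" and ?Gp = "PhiB ?p g X \<gamma>X"
  have gg: "?m \<in> GG" "?n \<in> GG" "?p \<in> GG" using g l k by simp_all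
  have e1 [simp]: "?p \<star> g \<star> gi ?p = ?n" using g l k group_G by (simp add: g_assoc group.inv_mult_group)
  have e2 [simp]: "?n \<star> ?p = ?p \<star> g" using g l k by (simp add: g_assoc)
  have e3 [simp]: "k \<star> ?m \<star> l = ?p \<star> g" using g l k by (simp add: g_assoc)
  have e4 [simp]: "k \<star> (l \<star> g) = ?p \<star> g" using g l k by (simp add: g_assoc)
  have nl: "twist ?m ?Y ?Gl" using twist_PhiB[OF nx l] .
  have nk: "twist ?n (F k ?Y) ?Gk" using twist_PhiB[OF nl k] .
  have np: "twist ?n (F ?p X) ?Gp" using twist_PhiB[OF nx gg(3)] by simp
  have ob: "ob ?W" "ob ?V" "ob ?Y" "ob (F g U)" using l k g U X by simp_all
  note tys = PhiB_typ[OF nl k] PhiB_typ[OF nx l] PhiB_typ[OF nx gg(3)]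
  note basic = g l k X U gg ob nx nl nk np tys
  note nomerge = merge_l merge_l' merge_r merge_r' merge_r2 merge_r2'
  let ?A = "iv (FC ?n k ?W) \<bullet> FC k ?m ?W"
  let ?B = "iv (FC ?m l U) \<bullet> FC l g U"
  have KK: "?Gk (F k ?W) \<bullet> F2 k ?Y ?W = (?A \<odot> idn (F k ?Y)) \<bullet> F2 k (F ?m ?W) ?Y \<bullet> FA k (?Gl ?W)"
    using PhiB_image_solved[OF nl k ob(1)] .
  have KL: "?Gl ?W \<bullet> F2 l X U = (?B \<odot> idn ?Y) \<bullet> F2 l (F g U) X \<bullet> FA l (\<gamma>X U)"
    using PhiB_image_solved[OF nx l U] .
  have KP: "?Gp (F ?p U) \<bullet> F2 ?p X U = ((iv (FC ?n ?p U) \<bullet> FC ?p g U) \<odot> idn (F ?p X)) \<bullet> F2 ?p (F g U) X \<bullet> FA ?p (\<gamma>X U)"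
    using PhiB_image_solved[OF nx gg(3) U] by simp
  have NP: "(FA ?n (iv (FC k l U)) \<odot> idn (F ?p X)) \<bullet> ?Gp (F ?p U) = ?Gp ?V \<bullet> (idn (F ?p X) \<odot> iv (FC k l U))"
    using PhiB_nat[OF nx gg(3), of "iv (FC k l U)"] basic by simp
  have MON1: "(FC k l (F g U) \<odot> FC k l X) \<bullet> F2 k (F l (F g U)) (F l X) \<bullet> FA k (F2 l (F g U) X) = F2 ?p (F g U) X \<bullet> FC k l (F g U \<diamond> X)"
    using FC_mon[OF k l ob(4) X] by simp
  have MON2: "(FC k l X \<odot> FC k l U) \<bullet> F2 k (F l X) (F l U) \<bullet> FA k (F2 l X U) = F2 ?p X U \<bullet> FC k l (X \<diamond> U)"
    using FC_mon[OF k l X U] by simp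
  have NAT1: "F2 k (F ?m ?W) ?Y \<bullet> FA k (?B \<odot> idn ?Y) = (FA k ?B \<odot> idn (F k ?Y)) \<bullet> F2 k (F l (F g U)) ?Y"
    using F2_nat[of k ?B "idn ?Y"] basic by simp
  have NAT2: "FC k l (F g U \<diamond> X) \<bullet> FA k (FA l (\<gamma>X U)) = FA ?p (\<gamma>X U) \<bullet> FC k l (X \<diamond> U)"
    using FC_nat[of k l "\<gamma>X U"] basic by simp
  have COC: "?A \<bullet> FA k ?B \<bullet> iv (FC k l (F g U)) = FA ?n (iv (FC k l U)) \<bullet> iv (FC ?n ?p U) \<bullet> FC ?p g U"
    using FC_conj_comp_coherence[OF g l k U] .
  let ?c = "FC k l (F g U)"
  have T5: "(idn (F ?n ?V) \<odot> FC k l X) \<bullet> (?A \<odot> idn (F k ?Y)) \<bullet> (FA k ?B \<odot> idn (F k ?Y))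
     = ((?A \<bullet> FA k ?B \<bullet> iv ?c) \<odot> idn (F ?p X)) \<bullet> (?c \<odot> FC k l X)"
    by (rule tA_comp_factor_iso) (use basic in simp_all)
  have FL: "FA k (?Gl ?W) \<bullet> FA k (F2 l X U) = FA k ((?B \<odot> idn ?Y) \<bullet> F2 l (F g U) X \<bullet> FA l (\<gamma>X U))"
  proof -
    have "FA k (?Gl ?W) \<bullet> FA k (F2 l X U) = FA k (?Gl ?W \<bullet> F2 l X U)" using basic by (simp add: FA_cmp)
    then show ?thesis unfolding KL .
  qed
  have TR: "FC k l X \<odot> idn ?V = (idn (F ?p X) \<odot> iv (FC k l U)) \<bullet> (FC k l X \<odot> FC k l U)"
    by (rule tA_idn_factor_iso) (use basic in simp_all)
  have "(idn (F ?n ?V) \<odot> FC k l X) \<bullet> ?Gk ?V \<bullet> F2 k ?Y ?W \<bullet> FA k (F2 l X U)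
     = (idn (F ?n ?V) \<odot> FC k l X) \<bullet> (?A \<odot> idn (F k ?Y)) \<bullet> F2 k (F ?m ?W) ?Y \<bullet> FA k (?Gl ?W) \<bullet> FA k (F2 l X U)"
    using basic by (simp add: reassoc22[OF KK] del: nomerge)
  also have "\<dots> = (idn (F ?n ?V) \<odot> FC k l X) \<bullet> (?A \<odot> idn (F k ?Y)) \<bullet> F2 k (F ?m ?W) ?Y \<bullet> FA k ((?B \<odot> idn ?Y) \<bullet> F2 l (F g U) X \<bullet> FA l (\<gamma>X U))"
    unfolding FL ..
  also have "\<dots> = (idn (F ?n ?V) \<odot> FC k l X) \<bullet> (?A \<odot> idn (F k ?Y)) \<bullet> F2 k (F ?m ?W) ?Y \<bullet> FA k (?B \<odot> idn ?Y) \<bullet> FA k (F2 l (F g U) X) \<bullet> FA k (FA l (\<gamma>X U))"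
    using basic by (simp add: FA_cmp del: nomerge)
  also have "\<dots> = (idn (F ?n ?V) \<odot> FC k l X) \<bullet> (?A \<odot> idn (F k ?Y)) \<bullet> (FA k ?B \<odot> idn (F k ?Y)) \<bullet> F2 k (F l (F g U)) ?Y \<bullet> FA k (F2 l (F g U) X) \<bullet> FA k (FA l (\<gamma>X U))"
    using basic by (simp add: reassoc22[OF NAT1] del: nomerge)
  also have "\<dots> = ((?A \<bullet> FA k ?B \<bullet> iv ?c) \<odot> idn (F ?p X)) \<bullet> (?c \<odot> FC k l X) \<bullet> F2 k (F l (F g U)) ?Y \<bullet> FA k (F2 l (F g U) X) \<bullet> FA k (FA l (\<gamma>X U))"
    using basic by (simp add: reassoc32[OF T5] del: nomerge)
  also have "\<dots> = ((?A \<bullet> FA k ?B \<bullet> iv ?c) \<odot> idn (F ?p X)) \<bullet> F2 ?p (F g U) X \<bullet> FC k l (F g U \<diamond> X) \<bullet> FA k (FA l (\<gamma>X U))"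
    using basic by (simp add: reassoc32[OF MON1] del: nomerge)
  also have "\<dots> = ((?A \<bullet> FA k ?B \<bullet> iv ?c) \<odot> idn (F ?p X)) \<bullet> F2 ?p (F g U) X \<bullet> FA ?p (\<gamma>X U) \<bullet> FC k l (X \<diamond> U)"
    unfolding NAT2 ..
  also have "\<dots> = ((FA ?n (iv (FC k l U)) \<bullet> iv (FC ?n ?p U) \<bullet> FC ?p g U) \<odot> idn (F ?p X)) \<bullet> F2 ?p (F g U) X \<bullet> FA ?p (\<gamma>X U) \<bullet> FC k l (X \<diamond> U)"
    unfolding COC ..
  also have "\<dots> = (FA ?n (iv (FC k l U)) \<odot> idn (F ?p X)) \<bullet> ((iv (FC ?n ?p U) \<bullet> FC ?p g U) \<odot> idn (F ?p X)) \<bullet> F2 ?p (F g U) X \<bullet> FA ?p (\<gamma>X U) \<bullet> FC k l (X \<diamond> U)"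
    using basic by simp
  also have "\<dots> = (FA ?n (iv (FC k l U)) \<odot> idn (F ?p X)) \<bullet> ?Gp (F ?p U) \<bullet> F2 ?p X U \<bullet> FC k l (X \<diamond> U)"
    using basic by (simp add: reassoc32[OF KP[symmetric]] del: nomerge)
  also have "\<dots> = ?Gp ?V \<bullet> (idn (F ?p X) \<odot> iv (FC k l U)) \<bullet> F2 ?p X U \<bullet> FC k l (X \<diamond> U)"
    using basic by (simp add: reassoc22[OF NP] del: nomerge)
  also have "\<dots> = ?Gp ?V \<bullet> (idn (F ?p X) \<odot> iv (FC k l U)) \<bullet> (FC k l X \<odot> FC k l U) \<bullet> F2 k ?Y ?W \<bullet> FA k (F2 l X U)"
    using basic by (simp add: MON2 del: nomerge)
  also have "\<dots> = ?Gp ?V \<bullet> (FC k l X \<odot> idn ?V) \<bullet> F2 k ?Y ?W \<bullet> FA k (F2 l X U)"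
    using basic by (simp add: reassoc21[OF TR[symmetric]] del: nomerge)
  finally show ?thesis .
qed

lemma Phi_comp_compat:
  assumes nx: "twist g X \<gamma>X" and l: "l \<in> GG" and k: "k \<in> GG" and V: "ob V"
  shows "(idn (F (k \<star> (l \<star> g \<star> gi l) \<star> gi k) V) \<odot> FC k l X) \<bullet> PhiB k (l \<star> g \<star> gi l) (F l X) (PhiB l g X \<gamma>X) V
       = PhiB (k \<star> l) g X \<gamma>X V \<bullet> (FC k l X \<odot> idn V)"
proof -
  have g: "g \<in> GG" and X: "ob X" using nx by (simp_all add: twist_grp twist_ob)
  let ?m = "l \<star> g \<star> gi l" and ?p = "k \<star> l"
  let ?n = "k \<star> ?m \<star> gi k"
  have gg: "?m \<in> GG" "?n \<in> GG" "?p \<in> GG" "gi ?p \<in> GG" using g l k by simp_all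
  have e1 [simp]: "?p \<star> g \<star> gi ?p = ?n" using g l k group_G by (simp add: g_assoc group.inv_mult_group)
  have nl: "twist ?m (F l X) (PhiB l g X \<gamma>X)" using twist_PhiB[OF nx l] .
  have n1: "twist ?n (F k (F l X)) (PhiB k ?m (F l X) (PhiB l g X \<gamma>X))" using twist_PhiB[OF nl k] .
  have n2: "twist ?n (F ?p X) (PhiB ?p g X \<gamma>X)" using twist_PhiB[OF nx gg(3)] by simp
  have f: "ar (FC k l X)" "dom (FC k l X) = F k (F l X)" "cod (FC k l X) = F ?p X" using k l X by simp_all
  define U where "U = F (gi ?p) V"
  have U: "ob U" unfolding U_def using gg V by simp
  let ?u = "FC ?p (gi ?p) V \<bullet> FC k l U"
  have u: "iso ?u" "cod ?u = V" "dom ?u = F k (F l U)" unfolding U_def using k l gg V by simp_all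
  show ?thesis
  proof (rule twist_compat_transport[OF n1 n2 f V u(1) u(2)])
    let ?J = "F2 k (F l X) (F l U) \<bullet> FA k (F2 l X U)"
    let ?L = "(idn (F ?n (F k (F l U))) \<odot> FC k l X) \<bullet> PhiB k ?m (F l X) (PhiB l g X \<gamma>X) (F k (F l U))"
    let ?R = "PhiB ?p g X \<gamma>X (F k (F l U)) \<bullet> (FC k l X \<odot> idn (F k (F l U)))"
    have J: "iso ?J" "cod ?J = F k (F l X) \<diamond> F k (F l U)" using k l X U by simp_all
    have ty: "ar ?L" "ar ?R" "dom ?L = F k (F l X) \<diamond> F k (F l U)" "dom ?R = F k (F l X) \<diamond> F k (F l U)"
      using PhiB_typ[OF nl k] PhiB_typ[OF nx gg(3)] k l X U gg by simp_all
    have "?L \<bullet> ?J = ?R \<bullet> ?J"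
      using Phi_comp_compat_precomposed[OF nx l k U] PhiB_typ[OF nl k] PhiB_typ[OF nx gg(3)] k l X U gg by simp
    then have "?L = ?R" using cancel_right[OF J(1), of ?L ?R] ty J by simp
    then show "(idn (F ?n (dom ?u)) \<odot> FC k l X) \<bullet> PhiB k ?m (F l X) (PhiB l g X \<gamma>X) (dom ?u)
       = PhiB ?p g X \<gamma>X (dom ?u) \<bullet> (FC k l X \<odot> idn (dom ?u))" unfolding u(3) .
  qed
qed

lemma Zhom_Phi_Zprod:
  assumes nx: "twist g X \<gamma>X" and ny: "twist h Y \<gamma>Y" and l: "l \<in> GG"
  shows "Zhom C G P (Zprod C G P (Phi C G P l (g, X, \<gamma>X)) (Phi C G P l (h, Y, \<gamma>Y)))
                    (iv (F2 l X Y)) (Phi C G P l (Zprod C G P (g, X, \<gamma>X) (h, Y, \<gamma>Y)))"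
proof -
  have "(l \<star> g \<star> gi l) \<star> (l \<star> h \<star> gi l) = l \<star> (g \<star> h) \<star> gi l"
    using l twist_grp[OF nx] twist_grp[OF ny] by (simp add: g_assoc)
  then show ?thesis unfolding Phi_eq Zprod_eq Zhom_def
    using Phi_tensor_compat[OF nx ny l] l twist_ob[OF nx] twist_ob[OF ny] by (simp add: is_arr_def)
qed

lemma Zhom_Phi_Zunit:
  assumes l: "l \<in> GG"
  shows "Zhom C G P (Phi C G P l (Zunit C G)) (F0 l) (Zunit C G)"
  unfolding Zunit_def Phi_eq Zhom_def using Phi_unit_compat[OF l] l by (simp add: is_arr_def)

lemma Zhom_Phi_Phi:
  assumes nx: "twist g X \<gamma>X" and k: "k \<in> GG" and l: "l \<in> GG"
  shows "Zhom C G P (Phi C G P k (Phi C G P l (g, X, \<gamma>X))) (FC k l X) (Phi C G P (k \<star> l) (g, X, \<gamma>X))"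
proof -
  have "(k \<star> l) \<star> g \<star> gi (k \<star> l) = k \<star> (l \<star> g \<star> gi l) \<star> gi k"
    using twist_grp[OF nx] l k group_G by (simp add: g_assoc group.inv_mult_group)
  then show ?thesis unfolding Phi_eq Zhom_def
    using Phi_comp_compat[OF nx l k] l k twist_ob[OF nx] by (simp add: is_arr_def)
qed

lemma Zhom_braiding:
  assumes zx: "Zobj C G P (g, X, \<gamma>X)" and zy: "Zobj C G P (h, Y, \<gamma>Y)"
  shows "Zhom C G P (Zprod C G P (g, X, \<gamma>X) (h, Y, \<gamma>Y)) (\<gamma>X Y)
                    (Zprod C G P (Phi C G P g (h, Y, \<gamma>Y)) (g, X, \<gamma>X))"
  unfolding Phi_eq Zprod_eq Zhom_def using braiding_compat[OF zx zy] Zobj_twist[OF zx] Zobj_twist[OF zy]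
  by (simp add: is_arr_def twist_grp twist_ob)

end

theorem mainTheorem4:
  fixes C :: "('o,'m) smcat" and G :: "'g monoid" and P :: "('g,'o,'m) gaction"
  assumes "group_action C G P"
    and "g \<in> carrier G" and "h \<in> carrier G" and "k \<in> carrier G" and "l \<in> carrier G"
    and "Zobj C G P (g, X, \<gamma>X)" and "Zobj C G P (h, Y, \<gamma>Y)"
  shows "Zhom C G P (Zprod C G P (Phi C G P l (g, X, \<gamma>X)) (Phi C G P l (h, Y, \<gamma>Y)))
                    (inv_arr C (ga_act2 P l X Y))
                    (Phi C G P l (Zprod C G P (g, X, \<gamma>X) (h, Y, \<gamma>Y)))
       \<and> Zhom C G P (Phi C G P l (Zunit C G)) (ga_act0 P l) (Zunit C G)
       \<and> Zhom C G P (Phi C G P k (Phi C G P l (g, X, \<gamma>X))) (ga_actC P k l X)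
                    (Phi C G P (k \<otimes>\<^bsub>G\<^esub> l) (g, X, \<gamma>X))
       \<and> Zhom C G P (Zprod C G P (g, X, \<gamma>X) (h, Y, \<gamma>Y)) (\<gamma>X Y)
                    (Zprod C G P (Phi C G P g (h, Y, \<gamma>Y)) (g, X, \<gamma>X))"
proof -
  interpret monoidal_action C G P by (rule monoidal_action.intro) fact
  have "twist g X \<gamma>X" "twist h Y \<gamma>Y" using assms(6,7) by (simp_all add: Zobj_twist)
  then show ?thesis
    using assms Zhom_Phi_Zprod Zhom_Phi_Zunit Zhom_Phi_Phi Zhom_braiding by simp
qed

end
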